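(* Let $\kappa$ be a regular infinite cardinal and $\mu$ a singular cardinal with $\mathrm{cf}(\mu)=\kappa$. The spaces $({}^{\mu}\kappa,\kappa)$ and $({}^{\mu}\mu,\kappa)$ are homeomorphic if and only if $\mu\le 2^{<\kappa}$.
   Context: For ordinals $\delta,\rho$, ${}^{\delta}\rho$ is the set of functions $\delta\to\rho$; for a partial function $s\colon\delta\rightharpoonup\rho$, $[s]=\{f\in{}^{\delta}\rho: s\subseteq f\}$. The ${<}\kappa$-box topology on ${}^{\delta}\rho$ has base $\{[s]: |\mathrm{dom}(s)|<\kappa\}$; $(X,\kappa)$ denotes $X$ with this topology. *)

theory Defs
  imports "HOL-Analysis.Analysis" "HOL-Library.FuncSet"
begin

text \<open>Cardinals are represented by cardinal well-orders (Card_order) from Main.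
  The ordinal kappa (resp. mu) is the field of a card order rk (resp. rm).\<close>

definition basic_box :: "'i set \<Rightarrow> 'a set \<Rightarrow> ('i \<Rightarrow> 'a option) \<Rightarrow> ('i \<Rightarrow> 'a) set" where
  "basic_box D R s = {f \<in> D \<rightarrow>\<^sub>E R. \<forall>i\<in>dom s. s i = Some (f i)}"

definition box_top :: "'i set \<Rightarrow> 'a set \<Rightarrow> 'c rel \<Rightarrow> ('i \<Rightarrow> 'a) topology" where
  "box_top D R k = topology_generated_by
     {basic_box D R s | s. dom s \<subseteq> D \<and> ran s \<subseteq> R \<and> ordLess2 (card_of (dom s)) k}"

definition cof_is :: "'m rel \<Rightarrow> 'k rel \<Rightarrow> bool" where
  "cof_is rm rk \<longleftrightarrow>
     (\<exists>C. C \<subseteq> Field rm \<and> cofinal C rm \<and> ordIso2 (card_of C) rk) \<and>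
     (\<forall>C. C \<subseteq> Field rm \<and> cofinal C rm \<longrightarrow> ordLeq2 rk (card_of C))"

text \<open>The set of all functions alpha -> 2 for ordinals alpha < kappa (alpha being a proper
  initial segment of Field rk); its cardinality is 2^{<kappa}.\<close>
definition two_less :: "'k rel \<Rightarrow> ('k \<Rightarrow> bool option) set" where
  "two_less rk = {f. \<exists>a \<in> Field rk. dom f = underS rk a}"

end

theory Submission
  imports Defs
begin

text \<open>
  All spaces carry the <\<kappa>-box topology and \<kappa> is regular, so a map between such spaces is
  continuous as soon as every output coordinate is locally determined by fewer than \<kappa> input
  coordinates.

  If \<mu> \<le> 2^<\<kappa>: code r \<in> \<kappa>^\<kappa> by x = r c0, by r restricted to a set S x of size |x| avoiding
  c0, and by the remaining values, re-indexed by a bijection. This gives \<kappa>^\<kappa> \<cong> \<Lambda> \<times> \<kappa>^\<kappa> with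
  \<Lambda> = (SIGMA x<\<kappa>. S x \<rightarrow> \<kappa>) discrete, and |\<Lambda>| \<ge> 2^<\<kappa> \<ge> \<mu> gives \<Lambda> \<cong> \<mu> \<times> \<Lambda>, hence \<kappa>^\<kappa> \<cong> \<mu> \<times> \<kappa>^\<kappa>.
  With \<mu> \<times> \<kappa> \<cong> \<mu> one gets
  \<kappa>^\<mu> \<cong> (\<kappa>^\<kappa>)^\<mu> \<cong> (\<mu> \<times> \<kappa>^\<kappa>)^\<mu> \<cong> \<mu>^\<mu> \<times> \<kappa>^\<mu> \<cong> (\<mu> \<times> \<kappa>)^\<mu> \<cong> \<mu>^\<mu>.

  Conversely, \<mu>^\<mu> contains \<mu> pairwise disjoint nonempty open sets {y. y m0 = a}. In \<kappa>^\<mu> such a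
  family yields pairwise incompatible partial functions with domains of size < \<kappa>; closing
  off under choosing a member extending a given small restriction, in \<kappa> stages and using
  (2^<\<kappa>)^<\<kappa> = 2^<\<kappa>, shows that there are at most 2^<\<kappa> of them.
\<close>

unbundle cardinal_syntax

section \<open>Sets of size less than a regular cardinal\<close>

lemma card_of_finite_ordLess:
  assumes "Card_order k" "\<not> finite (Field k)" "finite A"
  shows "|A| <o k"
  using finite_ordLess_infinite[of "|A|" k] assms card_of_Well_order[of A]
    card_order_on_well_order_on Field_card_of by metis

lemma card_of_insert_ordLess:
  assumes "Card_order k" "\<not> finite (Field k)" "|A| <o k"
  shows "|insert a A| <o k"
  using card_of_Un_ordLess_infinite_Field[OF assms(2,1) card_of_finite_ordLess[OF assms(1,2)] assms(3)]
  by (metis finite.emptyI finite_insert insert_is_Un)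

lemma card_of_subset_ordLess:
  assumes "|B| <o k" "A \<subseteq> B"
  shows "|A| <o k"
  using assms card_of_mono1 ordLeq_ordLess_trans by blast

lemma card_of_image_ordLess:
  assumes "|B| <o k"
  shows "|f ` B| <o k"
  using assms card_of_image ordLeq_ordLess_trans by blast

lemma card_of_Times_ordLess:
  assumes "stable k" "|A| <o k" "|B| <o k"
  shows "|A \<times> B| <o k"
  using stable_elim[OF assms(1,2), of "\<lambda>_. B"] assms(3) by blast

lemma card_of_ordLess_Field:
  assumes "Card_order k" "|B| <o k"
  shows "|B| <o |Field k|"
  using ordLess_ordIso_trans[OF assms(2) ordIso_symmetric[OF card_of_Field_ordIso[OF assms(1)]]] .

lemma card_of_Diff_ordLess_ordIso:
  assumes "\<not> finite A" "|B| <o |A|"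
  shows "|A - B| =o |A|"
proof -
  have "|A| \<le>o |A - B|"
  proof (rule ccontr)
    assume "\<not> |A| \<le>o |A - B|"
    then have "|A - B| <o |A|" using not_ordLeq_iff_ordLess card_of_Well_order by blast
    then have "|(A - B) \<union> B| <o |A|" using card_of_Un_ordLess_infinite[OF assms(1) _ assms(2)] by blast
    moreover have "|A| \<le>o |(A - B) \<union> B|" by (rule card_of_mono1) blast
    ultimately show False using not_ordLess_ordLeq by blast
  qed
  moreover have "|A - B| \<le>o |A|" by (rule card_of_mono1) blast
  ultimately show ?thesis using ordIso_iff_ordLeq by blast
qed

lemma regularCard_underS_bound:
  assumes rk: "Card_order rk" "\<not> finite (Field rk)" "regularCard rk"
    and B: "B \<subseteq> Field rk" "|B| <o rk"
  shows "\<exists>c\<in>Field rk. B \<subseteq> underS rk c"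
proof -
  have w: "wo_rel rk" by (rule Card_order_wo_rel[OF rk(1)])
  have "\<not> cofinal B rk"
    using rk(3) B not_ordLess_ordIso unfolding regularCard_def by blast
  then obtain a where a: "a \<in> Field rk" "\<forall>x\<in>B. \<not> (a \<noteq> x \<and> (a, x) \<in> rk)"
    unfolding cofinal_def by blast
  obtain c where c: "c \<in> Field rk" "a \<noteq> c" "(a, c) \<in> rk"
    using infinite_Card_order_limit[OF rk(1,2) a(1)] by blast
  have "x \<in> underS rk c" if x: "x \<in> B" for x
  proof -
    have "(x, a) \<in> rk"
      using wo_rel.TOTALS[OF w] a x B(1) by (metis subsetD)
    then have "(x, c) \<in> rk" using wo_rel.TRANS[OF w] c(3) unfolding trans_def by blast
    moreover have "x \<noteq> c"
      using \<open>(x, a) \<in> rk\<close> c(2,3) wo_rel.ANTISYM[OF w] unfolding antisym_def by blast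
    ultimately show ?thesis unfolding underS_def by blast
  qed
  then show ?thesis using c(1) by blast
qed

section \<open>The box topology and locally constant maps\<close>

lemma basic_box_restrict:
  "basic_box D R (\<lambda>i. if i \<in> S then Some (f i) else None) = {g \<in> D \<rightarrow>\<^sub>E R. \<forall>i\<in>S. g i = f i}"
  unfolding basic_box_def by (auto simp: dom_def)

lemma openin_box_topD:
  assumes k: "Card_order k" "\<not> finite (Field k)"
    and "openin (box_top D R k) U"
  shows "U \<subseteq> D \<rightarrow>\<^sub>E R"
    and "f \<in> U \<Longrightarrow> \<exists>S\<subseteq>D. |S| <o k \<and> (\<forall>g\<in>D \<rightarrow>\<^sub>E R. (\<forall>i\<in>S. g i = f i) \<longrightarrow> g \<in> U)"
proof -
  have "generate_topology_on {basic_box D R s | s. dom s \<subseteq> D \<and> ran s \<subseteq> R \<and> |dom s| <o k} U"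
    using assms(3) unfolding box_top_def openin_topology_generated_by_iff .
  then have "U \<subseteq> D \<rightarrow>\<^sub>E R \<and>
      (\<forall>f\<in>U. \<exists>S\<subseteq>D. |S| <o k \<and> (\<forall>g\<in>D \<rightarrow>\<^sub>E R. (\<forall>i\<in>S. g i = f i) \<longrightarrow> g \<in> U))"
  proof (induction rule: generate_topology_on.induct)
    case (Int a b)
    show ?case
    proof (intro conjI ballI)
      show "a \<inter> b \<subseteq> D \<rightarrow>\<^sub>E R" using Int.IH by blast
      fix f assume f: "f \<in> a \<inter> b"
      obtain S1 where "S1 \<subseteq> D" "|S1| <o k" "\<forall>g\<in>D \<rightarrow>\<^sub>E R. (\<forall>i\<in>S1. g i = f i) \<longrightarrow> g \<in> a"
        using bspec[OF conjunct2[OF Int.IH(1)], of f] f by blast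
      moreover obtain S2 where "S2 \<subseteq> D" "|S2| <o k" "\<forall>g\<in>D \<rightarrow>\<^sub>E R. (\<forall>i\<in>S2. g i = f i) \<longrightarrow> g \<in> b"
        using bspec[OF conjunct2[OF Int.IH(2)], of f] f by blast
      moreover have "|S1 \<union> S2| <o k"
        using card_of_Un_ordLess_infinite_Field[OF k(2,1)] calculation by blast
      ultimately show "\<exists>S\<subseteq>D. |S| <o k \<and> (\<forall>g\<in>D \<rightarrow>\<^sub>E R. (\<forall>i\<in>S. g i = f i) \<longrightarrow> g \<in> a \<inter> b)"
        by (intro exI[of _ "S1 \<union> S2"]) simp
    qed
  next
    case (UN K)
    show ?case
    proof (intro conjI ballI)
      show "\<Union>K \<subseteq> D \<rightarrow>\<^sub>E R" using UN.IH by blast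
      fix f assume "f \<in> \<Union>K"
      then obtain a where a: "a \<in> K" "f \<in> a" by blast
      then show "\<exists>S\<subseteq>D. |S| <o k \<and> (\<forall>g\<in>D \<rightarrow>\<^sub>E R. (\<forall>i\<in>S. g i = f i) \<longrightarrow> g \<in> \<Union>K)"
        using bspec[OF conjunct2[OF UN.IH[OF a(1)]] a(2)] a(1) by blast
    qed
  next
    case (Basis s)
    then obtain t where t: "s = basic_box D R t" "dom t \<subseteq> D" "|dom t| <o k" by blast
    show ?case
    proof (intro conjI ballI)
      show "s \<subseteq> D \<rightarrow>\<^sub>E R" unfolding t basic_box_def by blast
      fix f assume "f \<in> s"
      then have "\<forall>g\<in>D \<rightarrow>\<^sub>E R. (\<forall>i\<in>dom t. g i = f i) \<longrightarrow> g \<in> s"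
        unfolding t basic_box_def by auto
      then show "\<exists>S\<subseteq>D. |S| <o k \<and> (\<forall>g\<in>D \<rightarrow>\<^sub>E R. (\<forall>i\<in>S. g i = f i) \<longrightarrow> g \<in> s)"
        using t(2,3) by blast
    qed
  qed simp
  then show "U \<subseteq> D \<rightarrow>\<^sub>E R"
    and "f \<in> U \<Longrightarrow> \<exists>S\<subseteq>D. |S| <o k \<and> (\<forall>g\<in>D \<rightarrow>\<^sub>E R. (\<forall>i\<in>S. g i = f i) \<longrightarrow> g \<in> U)"
    by blast+
qed

lemma openin_box_topI:
  assumes U: "U \<subseteq> D \<rightarrow>\<^sub>E R"
    and nbhd: "\<And>f. f \<in> U \<Longrightarrow> \<exists>S\<subseteq>D. |S| <o k \<and> (\<forall>g\<in>D \<rightarrow>\<^sub>E R. (\<forall>i\<in>S. g i = f i) \<longrightarrow> g \<in> U)"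
  shows "openin (box_top D R k) U"
proof -
  have "\<forall>f\<in>U. \<exists>S. S \<subseteq> D \<and> |S| <o k \<and>
      (\<forall>g\<in>D \<rightarrow>\<^sub>E R. (\<forall>i\<in>S. g i = f i) \<longrightarrow> g \<in> U)"
    using nbhd by blast
  then obtain S where S: "\<forall>f\<in>U. S f \<subseteq> D \<and> |S f| <o k \<and>
      (\<forall>g\<in>D \<rightarrow>\<^sub>E R. (\<forall>i\<in>S f. g i = f i) \<longrightarrow> g \<in> U)"
    by (rule bchoice[THEN exE])
  define s where "s f = (\<lambda>i. if i \<in> S f then Some (f i) else None)" for f
  have "basic_box D R (s f) \<subseteq> U" "f \<in> basic_box D R (s f)" if "f \<in> U" for f
    unfolding s_def basic_box_restrict using S U that by auto
  then have "U = (\<Union>f\<in>U. basic_box D R (s f))" by blast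
  moreover have "generate_topology_on {basic_box D R s | s. dom s \<subseteq> D \<and> ran s \<subseteq> R \<and> |dom s| <o k}
      (\<Union>f\<in>U. basic_box D R (s f))"
  proof (rule generate_topology_on.UN)
    fix b assume "b \<in> (\<lambda>f. basic_box D R (s f)) ` U"
    then obtain f where "f \<in> U" "b = basic_box D R (s f)" by blast
    moreover have "ran (s f) \<subseteq> R" if "f \<in> U"
      using S U that unfolding s_def ran_def by (fastforce split: if_splits)
    moreover have "dom (s f) = S f" unfolding s_def by (auto simp: dom_def)
    ultimately have "b = basic_box D R (s f) \<and> dom (s f) \<subseteq> D \<and> ran (s f) \<subseteq> R \<and> |dom (s f)| <o k"
      using S by auto
    then have "b \<in> {basic_box D R s | s. dom s \<subseteq> D \<and> ran s \<subseteq> R \<and> |dom s| <o k}"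
      by blast
    then show "generate_topology_on {basic_box D R s | s. dom s \<subseteq> D \<and> ran s \<subseteq> R \<and> |dom s| <o k} b"
      by (rule generate_topology_on.Basis)
  qed
  ultimately show ?thesis
    unfolding box_top_def openin_topology_generated_by_iff by simp
qed

lemma topspace_box_top:
  assumes "Card_order k" "\<not> finite (Field k)"
  shows "topspace (box_top D R k) = D \<rightarrow>\<^sub>E R"
proof
  have "openin (box_top D R k) (D \<rightarrow>\<^sub>E R)"
    using card_of_finite_ordLess[OF assms finite.emptyI] by (intro openin_box_topI) auto
  then show "D \<rightarrow>\<^sub>E R \<subseteq> topspace (box_top D R k)" by (rule openin_subset)
  show "topspace (box_top D R k) \<subseteq> D \<rightarrow>\<^sub>E R"
    by (rule openin_box_topD(1)[OF assms openin_topspace])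
qed

definition box_locally_constant :: "'c rel \<Rightarrow> 'i set \<Rightarrow> 'a set \<Rightarrow> (('i \<Rightarrow> 'a) \<Rightarrow> 'b) \<Rightarrow> bool" where
  "box_locally_constant k D R \<phi> \<longleftrightarrow> (\<forall>f\<in>D \<rightarrow>\<^sub>E R. \<exists>S\<subseteq>D. |S| <o k \<and>
      (\<forall>g\<in>D \<rightarrow>\<^sub>E R. (\<forall>i\<in>S. g i = f i) \<longrightarrow> \<phi> g = \<phi> f))"

lemma box_locally_constantD:
  assumes "box_locally_constant k D R \<phi>" "f \<in> D \<rightarrow>\<^sub>E R"
  obtains S where "S \<subseteq> D" "|S| <o k" "\<forall>g\<in>D \<rightarrow>\<^sub>E R. (\<forall>i\<in>S. g i = f i) \<longrightarrow> \<phi> g = \<phi> f"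
proof -
  have "\<exists>S\<subseteq>D. |S| <o k \<and> (\<forall>g\<in>D \<rightarrow>\<^sub>E R. (\<forall>i\<in>S. g i = f i) \<longrightarrow> \<phi> g = \<phi> f)"
    using assms unfolding box_locally_constant_def by (rule bspec)
  then show ?thesis using that by blast
qed

lemma box_locally_constant_comp:
  assumes "box_locally_constant k D R \<phi>"
  shows "box_locally_constant k D R (\<lambda>f. h (\<phi> f))"
  unfolding box_locally_constant_def
proof
  fix f assume "f \<in> D \<rightarrow>\<^sub>E R"
  with assms obtain S where S: "S \<subseteq> D" "|S| <o k" "\<forall>g\<in>D \<rightarrow>\<^sub>E R. (\<forall>i\<in>S. g i = f i) \<longrightarrow> \<phi> g = \<phi> f"
    by (rule box_locally_constantD)
  show "\<exists>S\<subseteq>D. |S| <o k \<and> (\<forall>g\<in>D \<rightarrow>\<^sub>E R. (\<forall>i\<in>S. g i = f i) \<longrightarrow> h (\<phi> g) = h (\<phi> f))"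
    using S by (intro exI[of _ S]) simp
qed

lemma box_locally_constant_bind:
  assumes k: "Card_order k" "\<not> finite (Field k)"
    and \<phi>: "box_locally_constant k D R \<phi>"
    and \<rho>: "\<And>f. f \<in> D \<rightarrow>\<^sub>E R \<Longrightarrow> box_locally_constant k D R (\<rho> (\<phi> f))"
  shows "box_locally_constant k D R (\<lambda>f. \<rho> (\<phi> f) f)"
  unfolding box_locally_constant_def
proof
  fix f assume f: "f \<in> D \<rightarrow>\<^sub>E R"
  obtain S1 where S1: "S1 \<subseteq> D" "|S1| <o k" "\<forall>g\<in>D \<rightarrow>\<^sub>E R. (\<forall>i\<in>S1. g i = f i) \<longrightarrow> \<phi> g = \<phi> f"
    using \<phi> f by (rule box_locally_constantD)
  obtain S2 where S2: "S2 \<subseteq> D" "|S2| <o k"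
    "\<forall>g\<in>D \<rightarrow>\<^sub>E R. (\<forall>i\<in>S2. g i = f i) \<longrightarrow> \<rho> (\<phi> f) g = \<rho> (\<phi> f) f"
    using \<rho>[OF f] f by (rule box_locally_constantD)
  show "\<exists>S\<subseteq>D. |S| <o k \<and> (\<forall>g\<in>D \<rightarrow>\<^sub>E R. (\<forall>i\<in>S. g i = f i) \<longrightarrow> \<rho> (\<phi> g) g = \<rho> (\<phi> f) f)"
  proof (intro exI[of _ "S1 \<union> S2"] conjI ballI impI)
    show "S1 \<union> S2 \<subseteq> D" using S1(1) S2(1) by blast
    show "|S1 \<union> S2| <o k" using card_of_Un_ordLess_infinite_Field[OF k(2,1) S1(2) S2(2)] .
    fix g assume g: "g \<in> D \<rightarrow>\<^sub>E R" "\<forall>i\<in>S1 \<union> S2. g i = f i"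
    then have "\<phi> g = \<phi> f" using S1(3) by blast
    moreover have "\<rho> (\<phi> f) g = \<rho> (\<phi> f) f" using S2(3) g by blast
    ultimately show "\<rho> (\<phi> g) g = \<rho> (\<phi> f) f" by simp
  qed
qed

lemma box_locally_constant_coordinate:
  assumes "Card_order k" "\<not> finite (Field k)" "a \<in> D"
  shows "box_locally_constant k D R (\<lambda>f. h (f a))"
  unfolding box_locally_constant_def
proof
  fix f
  show "\<exists>S\<subseteq>D. |S| <o k \<and> (\<forall>g\<in>D \<rightarrow>\<^sub>E R. (\<forall>i\<in>S. g i = f i) \<longrightarrow> h (g a) = h (f a))"
  proof (intro exI[of _ "{a}"] conjI)
    show "|{a}| <o k" by (rule card_of_finite_ordLess[OF assms(1,2)]) simp
  qed (simp_all add: assms(3))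
qed

lemma box_locally_constant_reindex:
  assumes \<phi>: "box_locally_constant k I R' \<phi>"
    and \<sigma>: "\<sigma> ` I \<subseteq> D" and \<tau>: "\<tau> ` R \<subseteq> R'"
  shows "box_locally_constant k D R (\<lambda>g. \<phi> (\<lambda>i\<in>I. \<tau> (g (\<sigma> i))))"
  unfolding box_locally_constant_def
proof
  fix f assume f: "f \<in> D \<rightarrow>\<^sub>E R"
  have reindex_in: "(\<lambda>i\<in>I. \<tau> (g (\<sigma> i))) \<in> I \<rightarrow>\<^sub>E R'" if "g \<in> D \<rightarrow>\<^sub>E R" for g
    using that \<sigma> \<tau> by auto
  obtain S where S: "S \<subseteq> I" "|S| <o k"
    "\<forall>z\<in>I \<rightarrow>\<^sub>E R'. (\<forall>i\<in>S. z i = (\<lambda>i\<in>I. \<tau> (f (\<sigma> i))) i) \<longrightarrow> \<phi> z = \<phi> (\<lambda>i\<in>I. \<tau> (f (\<sigma> i)))"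
    by (rule box_locally_constantD[OF \<phi> reindex_in[OF f]])
  show "\<exists>T\<subseteq>D. |T| <o k \<and> (\<forall>g\<in>D \<rightarrow>\<^sub>E R. (\<forall>i\<in>T. g i = f i) \<longrightarrow>
      \<phi> (\<lambda>i\<in>I. \<tau> (g (\<sigma> i))) = \<phi> (\<lambda>i\<in>I. \<tau> (f (\<sigma> i))))"
  proof (intro exI[of _ "\<sigma> ` S"] conjI ballI impI)
    show "\<sigma> ` S \<subseteq> D" using S(1) \<sigma> by blast
    show "|\<sigma> ` S| <o k" using S(2) by (rule card_of_image_ordLess)
    fix g assume "g \<in> D \<rightarrow>\<^sub>E R" "\<forall>i\<in>\<sigma> ` S. g i = f i"
    then show "\<phi> (\<lambda>i\<in>I. \<tau> (g (\<sigma> i))) = \<phi> (\<lambda>i\<in>I. \<tau> (f (\<sigma> i)))"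
      using S(1,3) reindex_in by auto
  qed
qed

lemma box_locally_constant_const:
  assumes "Card_order k" "\<not> finite (Field k)"
  shows "box_locally_constant k D R (\<lambda>f. c)"
  unfolding box_locally_constant_def
  using card_of_finite_ordLess[OF assms finite.emptyI] by blast

lemma box_locally_constant_restrict:
  assumes "A \<subseteq> D" "|A| <o k"
  shows "box_locally_constant k D R (\<lambda>f. restrict f A)"
  unfolding box_locally_constant_def
proof
  fix f
  show "\<exists>S\<subseteq>D. |S| <o k \<and> (\<forall>g\<in>D \<rightarrow>\<^sub>E R. (\<forall>i\<in>S. g i = f i) \<longrightarrow> restrict g A = restrict f A)"
  proof (intro exI[of _ A] conjI ballI impI)
    fix g assume "\<forall>i\<in>A. g i = f i"
    then show "restrict g A = restrict f A" by (intro restrict_ext) simp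
  qed (use assms in simp_all)
qed

lemma box_locally_constant_compose:
  assumes k: "Card_order k" "\<not> finite (Field k)" "regularCard k"
    and \<phi>: "box_locally_constant k D' R' \<phi>"
    and Z: "\<And>f. f \<in> D \<rightarrow>\<^sub>E R \<Longrightarrow> Z f \<in> D' \<rightarrow>\<^sub>E R'"
    and Z_loc: "\<And>j. j \<in> D' \<Longrightarrow> box_locally_constant k D R (\<lambda>f. Z f j)"
  shows "box_locally_constant k D R (\<lambda>f. \<phi> (Z f))"
  unfolding box_locally_constant_def
proof
  fix f assume f: "f \<in> D \<rightarrow>\<^sub>E R"
  obtain S' where S': "S' \<subseteq> D'" "|S'| <o k" "\<forall>z\<in>D' \<rightarrow>\<^sub>E R'. (\<forall>j\<in>S'. z j = Z f j) \<longrightarrow> \<phi> z = \<phi> (Z f)"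
    by (rule box_locally_constantD[OF \<phi> Z[OF f]])
  have "\<forall>j\<in>S'. \<exists>S. S \<subseteq> D \<and> |S| <o k \<and> (\<forall>g\<in>D \<rightarrow>\<^sub>E R. (\<forall>i\<in>S. g i = f i) \<longrightarrow> Z g j = Z f j)"
  proof
    fix j assume "j \<in> S'"
    then obtain S where "S \<subseteq> D" "|S| <o k" "\<forall>g\<in>D \<rightarrow>\<^sub>E R. (\<forall>i\<in>S. g i = f i) \<longrightarrow> Z g j = Z f j"
      using box_locally_constantD[OF Z_loc f] S'(1) by blast
    then show "\<exists>S. S \<subseteq> D \<and> |S| <o k \<and> (\<forall>g\<in>D \<rightarrow>\<^sub>E R. (\<forall>i\<in>S. g i = f i) \<longrightarrow> Z g j = Z f j)"
      by blast
  qed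
  then obtain S where S: "\<forall>j\<in>S'. S j \<subseteq> D \<and> |S j| <o k \<and>
      (\<forall>g\<in>D \<rightarrow>\<^sub>E R. (\<forall>i\<in>S j. g i = f i) \<longrightarrow> Z g j = Z f j)"
    by (rule bchoice[THEN exE])
  show "\<exists>T\<subseteq>D. |T| <o k \<and> (\<forall>g\<in>D \<rightarrow>\<^sub>E R. (\<forall>i\<in>T. g i = f i) \<longrightarrow> \<phi> (Z g) = \<phi> (Z f))"
  proof (intro exI[of _ "\<Union>j\<in>S'. S j"] conjI ballI impI)
    show "(\<Union>j\<in>S'. S j) \<subseteq> D" using S by blast
    show "|\<Union>j\<in>S'. S j| <o k"
      by (rule stable_UNION[OF regularCard_stable[OF k] S'(2)]) (use S in blast)
    fix g assume g: "g \<in> D \<rightarrow>\<^sub>E R" "\<forall>i\<in>\<Union>j\<in>S'. S j. g i = f i"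
    have "Z g j = Z f j" if j: "j \<in> S'" for j
    proof -
      have "\<forall>g\<in>D \<rightarrow>\<^sub>E R. (\<forall>i\<in>S j. g i = f i) \<longrightarrow> Z g j = Z f j" using S j by blast
      moreover have "\<forall>i\<in>S j. g i = f i" using g(2) j by blast
      ultimately show ?thesis using g(1) by blast
    qed
    then show "\<phi> (Z g) = \<phi> (Z f)" using S'(3) Z[OF g(1)] by blast
  qed
qed

lemma continuous_map_box_topI:
  assumes k: "Card_order k" "\<not> finite (Field k)" "regularCard k"
    and F: "\<And>f. f \<in> D \<rightarrow>\<^sub>E R \<Longrightarrow> F f \<in> D' \<rightarrow>\<^sub>E R'"
    and loc: "\<And>j. j \<in> D' \<Longrightarrow> box_locally_constant k D R (\<lambda>f. F f j)"
  shows "continuous_map (box_top D R k) (box_top D' R' k) F"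
  unfolding continuous_map_def topspace_box_top[OF k(1,2)]
proof (intro conjI allI impI)
  show "F \<in> (D \<rightarrow>\<^sub>E R) \<rightarrow> (D' \<rightarrow>\<^sub>E R')" using F by blast
  fix U assume U: "openin (box_top D' R' k) U"
  show "openin (box_top D R k) {f \<in> D \<rightarrow>\<^sub>E R. F f \<in> U}"
  proof (rule openin_box_topI)
    fix f assume "f \<in> {f \<in> D \<rightarrow>\<^sub>E R. F f \<in> U}"
    then have f: "f \<in> D \<rightarrow>\<^sub>E R" "F f \<in> U" by simp_all
    obtain S' where S': "S' \<subseteq> D'" "|S'| <o k" "\<forall>g\<in>D' \<rightarrow>\<^sub>E R'. (\<forall>j\<in>S'. g j = F f j) \<longrightarrow> g \<in> U"
      using openin_box_topD(2)[OF k(1,2) U f(2)] by blast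
    have "\<forall>j\<in>S'. \<exists>S. S \<subseteq> D \<and> |S| <o k \<and> (\<forall>g\<in>D \<rightarrow>\<^sub>E R. (\<forall>i\<in>S. g i = f i) \<longrightarrow> F g j = F f j)"
      using loc S'(1) f(1) unfolding box_locally_constant_def by blast
    then obtain S where S: "\<forall>j\<in>S'. S j \<subseteq> D \<and> |S j| <o k \<and>
        (\<forall>g\<in>D \<rightarrow>\<^sub>E R. (\<forall>i\<in>S j. g i = f i) \<longrightarrow> F g j = F f j)"
      by (rule bchoice[THEN exE])
    have "|\<Union>j\<in>S'. S j| <o k"
      by (rule stable_UNION[OF regularCard_stable[OF k] S'(2)]) (use S in blast)
    moreover have "F g \<in> U" if g: "g \<in> D \<rightarrow>\<^sub>E R" "\<forall>i\<in>\<Union>j\<in>S'. S j. g i = f i" for g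
    proof -
      have "\<forall>j\<in>S'. F g j = F f j" using S g by blast
      then show ?thesis using S'(3) F[OF g(1)] by blast
    qed
    ultimately show "\<exists>T\<subseteq>D. |T| <o k \<and>
        (\<forall>g\<in>D \<rightarrow>\<^sub>E R. (\<forall>i\<in>T. g i = f i) \<longrightarrow> g \<in> {f \<in> D \<rightarrow>\<^sub>E R. F f \<in> U})"
      using S by (intro exI[of _ "\<Union>j\<in>S'. S j"]) auto
  qed auto
qed

lemma homeomorphic_box_topI:
  assumes k: "Card_order k" "\<not> finite (Field k)" "regularCard k"
    and F: "\<And>f. f \<in> D \<rightarrow>\<^sub>E R \<Longrightarrow> F f \<in> D' \<rightarrow>\<^sub>E R'"
    and G: "\<And>g. g \<in> D' \<rightarrow>\<^sub>E R' \<Longrightarrow> G g \<in> D \<rightarrow>\<^sub>E R"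
    and GF: "\<And>f. f \<in> D \<rightarrow>\<^sub>E R \<Longrightarrow> G (F f) = f"
    and FG: "\<And>g. g \<in> D' \<rightarrow>\<^sub>E R' \<Longrightarrow> F (G g) = g"
    and F_loc: "\<And>j. j \<in> D' \<Longrightarrow> box_locally_constant k D R (\<lambda>f. F f j)"
    and G_loc: "\<And>i. i \<in> D \<Longrightarrow> box_locally_constant k D' R' (\<lambda>g. G g i)"
  shows "box_top D R k homeomorphic_space box_top D' R' k"
  unfolding homeomorphic_space_def homeomorphic_maps_def topspace_box_top[OF k(1,2)]
  using continuous_map_box_topI[OF k F F_loc] continuous_map_box_topI[OF k G G_loc] GF FG by blast

section \<open>Absorbing a discrete factor\<close>

text \<open>\<open>\<psi>\<close> is a homeomorphism from \<open>K \<rightarrow>\<^sub>E K\<close> onto \<open>L \<times> (K \<rightarrow>\<^sub>E K)\<close>, with \<open>L\<close> discrete.\<close>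
definition box_splits_off ::
    "'c rel \<Rightarrow> 'k set \<Rightarrow> 'l set \<Rightarrow> (('k \<Rightarrow> 'k) \<Rightarrow> 'l \<times> ('k \<Rightarrow> 'k)) \<Rightarrow> ('l \<times> ('k \<Rightarrow> 'k) \<Rightarrow> 'k \<Rightarrow> 'k) \<Rightarrow> bool"
  where "box_splits_off k K L \<psi> \<psi>' \<longleftrightarrow>
    (\<forall>r\<in>K \<rightarrow>\<^sub>E K. \<psi> r \<in> L \<times> (K \<rightarrow>\<^sub>E K) \<and> \<psi>' (\<psi> r) = r) \<and>
    (\<forall>p\<in>L \<times> (K \<rightarrow>\<^sub>E K). \<psi>' p \<in> K \<rightarrow>\<^sub>E K \<and> \<psi> (\<psi>' p) = p) \<and>
    box_locally_constant k K K (\<lambda>r. fst (\<psi> r)) \<and>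
    (\<forall>b\<in>K. box_locally_constant k K K (\<lambda>r. snd (\<psi> r) b)) \<and>
    (\<forall>l\<in>L. \<forall>b\<in>K. box_locally_constant k K K (\<lambda>z. \<psi>' (l, z) b))"

lemma box_splits_offD:
  assumes "box_splits_off k K L \<psi> \<psi>'"
  shows "r \<in> K \<rightarrow>\<^sub>E K \<Longrightarrow> \<psi> r \<in> L \<times> (K \<rightarrow>\<^sub>E K)"
    and "r \<in> K \<rightarrow>\<^sub>E K \<Longrightarrow> \<psi>' (\<psi> r) = r"
    and "p \<in> L \<times> (K \<rightarrow>\<^sub>E K) \<Longrightarrow> \<psi>' p \<in> K \<rightarrow>\<^sub>E K"
    and "p \<in> L \<times> (K \<rightarrow>\<^sub>E K) \<Longrightarrow> \<psi> (\<psi>' p) = p"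
    and "box_locally_constant k K K (\<lambda>r. fst (\<psi> r))"
    and "b \<in> K \<Longrightarrow> box_locally_constant k K K (\<lambda>r. snd (\<psi> r) b)"
    and "l \<in> L \<Longrightarrow> b \<in> K \<Longrightarrow> box_locally_constant k K K (\<lambda>z. \<psi>' (l, z) b)"
  using assms unfolding box_splits_off_def by blast+

text \<open>From \<open>M \<times> K \<cong> M\<close> and \<open>K^K \<cong> M \<times> K^K\<close>:
  \<open>K^M \<cong> (K^K)^M \<cong> (M \<times> K^K)^M \<cong> M^M \<times> K^M \<cong> (M \<times> K)^M \<cong> M^M\<close>.\<close>
locale box_absorption =
  fixes k :: "'c rel" and M :: "'m set" and K :: "'k set"
    and e :: "'m \<times> 'k \<Rightarrow> 'm"
    and \<psi> :: "('k \<Rightarrow> 'k) \<Rightarrow> 'm \<times> ('k \<Rightarrow> 'k)" and \<psi>' :: "'m \<times> ('k \<Rightarrow> 'k) \<Rightarrow> 'k \<Rightarrow> 'k"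
  assumes card: "Card_order k" "\<not> finite (Field k)" "regularCard k"
    and e: "bij_betw e (M \<times> K) M"
    and splits: "box_splits_off k K M \<psi> \<psi>'"
begin

abbreviation e' :: "'m \<Rightarrow> 'm \<times> 'k" where
  "e' \<equiv> inv_into (M \<times> K) e"

lemma e_in: "a \<in> M \<Longrightarrow> b \<in> K \<Longrightarrow> e (a, b) \<in> M"
  using bij_betw_apply[OF e] by blast

lemma e'_e [simp]: "a \<in> M \<Longrightarrow> b \<in> K \<Longrightarrow> e' (e (a, b)) = (a, b)"
  using bij_betw_inv_into_left[OF e] by blast

lemma e_e' [simp]: "c \<in> M \<Longrightarrow> e (e' c) = c"
  using bij_betw_inv_into_right[OF e] by blast

lemma e'_in: "c \<in> M \<Longrightarrow> e' c \<in> M \<times> K"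
  using bij_betw_apply[OF bij_betw_inv_into[OF e]] by blast

lemma M_cases:
  assumes "c \<in> M"
  obtains a b where "a \<in> M" "b \<in> K" "c = e (a, b)"
  using e'_in[OF assms] e_e'[OF assms] by (metis mem_Times_iff prod.collapse)

lemmas \<psi>_in = box_splits_offD(1)[OF splits]
  and \<psi>'_\<psi> = box_splits_offD(2)[OF splits]
  and \<psi>'_in = box_splits_offD(3)[OF splits]
  and \<psi>_\<psi>' = box_splits_offD(4)[OF splits]
  and fst_\<psi>_locally_constant = box_splits_offD(5)[OF splits]
  and snd_\<psi>_locally_constant = box_splits_offD(6)[OF splits]
  and \<psi>'_locally_constant = box_splits_offD(7)[OF splits]

definition row :: "('m \<Rightarrow> 'k) \<Rightarrow> 'm \<Rightarrow> 'k \<Rightarrow> 'k" where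
  "row x a = (\<lambda>b\<in>K. x (e (a, b)))"

definition unpack :: "('m \<Rightarrow> 'm) \<Rightarrow> 'm \<Rightarrow> 'm \<times> ('k \<Rightarrow> 'k)" where
  "unpack y a = (fst (e' (y a)), \<lambda>b\<in>K. snd (e' (y (e (a, b)))))"

text \<open>If \<open>\<psi> (row x a) = (m a, z a)\<close>, then \<open>encode x\<close> stores the pair \<open>(m c, z a b)\<close>
  at \<open>c = e (a, b)\<close>; \<open>unpack\<close> recovers \<open>(m a, z a)\<close> from the values at \<open>a\<close> and \<open>e (a, -)\<close>.\<close>
definition encode :: "('m \<Rightarrow> 'k) \<Rightarrow> 'm \<Rightarrow> 'm" where
  "encode x = (\<lambda>c\<in>M. case e' c of (a, b) \<Rightarrow> e (fst (\<psi> (row x c)), snd (\<psi> (row x a)) b))"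

definition decode :: "('m \<Rightarrow> 'm) \<Rightarrow> 'm \<Rightarrow> 'k" where
  "decode y = (\<lambda>c\<in>M. case e' c of (a, b) \<Rightarrow> \<psi>' (unpack y a) b)"

lemma encode_apply:
  "a \<in> M \<Longrightarrow> b \<in> K \<Longrightarrow> encode x (e (a, b)) = e (fst (\<psi> (row x (e (a, b)))), snd (\<psi> (row x a)) b)"
  unfolding encode_def by (simp add: e_in)

lemma decode_apply: "a \<in> M \<Longrightarrow> b \<in> K \<Longrightarrow> decode y (e (a, b)) = \<psi>' (unpack y a) b"
  unfolding decode_def by (simp add: e_in)

lemma row_in: "x \<in> M \<rightarrow>\<^sub>E K \<Longrightarrow> a \<in> M \<Longrightarrow> row x a \<in> K \<rightarrow>\<^sub>E K"
  unfolding row_def using e_in by auto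

lemma unpack_in:
  assumes y: "y \<in> M \<rightarrow>\<^sub>E M" and a: "a \<in> M"
  shows "unpack y a \<in> M \<times> (K \<rightarrow>\<^sub>E K)"
proof -
  have "fst (e' (y a)) \<in> M" using e'_in[OF PiE_mem[OF y a]] by (simp add: mem_Times_iff)
  moreover have "snd (e' (y (e (a, b)))) \<in> K" if "b \<in> K" for b
    using e'_in[OF PiE_mem[OF y e_in[OF a that]]] by (simp add: mem_Times_iff)
  ultimately show ?thesis unfolding unpack_def by auto
qed

lemma encode_in: "x \<in> M \<rightarrow>\<^sub>E K \<Longrightarrow> encode x \<in> M \<rightarrow>\<^sub>E M"
proof -
  assume x: "x \<in> M \<rightarrow>\<^sub>E K"
  have "encode x c \<in> M" if "c \<in> M" for c
  proof -
    obtain a b where ab: "a \<in> M" "b \<in> K" "c = e (a, b)" using M_cases[OF \<open>c \<in> M\<close>] .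
    then show ?thesis
      using \<psi>_in[OF row_in[OF x \<open>c \<in> M\<close>]] \<psi>_in[OF row_in[OF x ab(1)]]
      by (auto simp: encode_apply mem_Times_iff intro!: e_in)
  qed
  then show ?thesis unfolding encode_def by auto
qed

lemma decode_in: "y \<in> M \<rightarrow>\<^sub>E M \<Longrightarrow> decode y \<in> M \<rightarrow>\<^sub>E K"
proof -
  assume y: "y \<in> M \<rightarrow>\<^sub>E M"
  have "decode y c \<in> K" if "c \<in> M" for c
  proof -
    obtain a b where ab: "a \<in> M" "b \<in> K" "c = e (a, b)" using M_cases[OF \<open>c \<in> M\<close>] .
    then show ?thesis using \<psi>'_in[OF unpack_in[OF y ab(1)]] by (auto simp: decode_apply)
  qed
  then show ?thesis unfolding decode_def by auto
qed

lemma unpack_encode: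
  assumes x: "x \<in> M \<rightarrow>\<^sub>E K" and a: "a \<in> M"
  shows "unpack (encode x) a = \<psi> (row x a)"
proof -
  obtain a1 b1 where a1: "a1 \<in> M" "b1 \<in> K" "a = e (a1, b1)" using M_cases[OF a] .
  have \<psi>a: "fst (\<psi> (row x a)) \<in> M" "snd (\<psi> (row x a)) \<in> K \<rightarrow>\<^sub>E K"
    using \<psi>_in[OF row_in[OF x a]] by auto
  have "snd (\<psi> (row x a1)) b1 \<in> K"
    using \<psi>_in[OF row_in[OF x a1(1)]] a1(2) by (auto simp: mem_Times_iff)
  then have "fst (e' (encode x a)) = fst (\<psi> (row x a))"
    using a1 \<psi>a by (simp add: encode_apply)
  moreover have "(\<lambda>b\<in>K. snd (e' (encode x (e (a, b))))) = snd (\<psi> (row x a))"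
  proof (rule PiE_ext[OF _ \<psi>a(2)])
    fix b assume b: "b \<in> K"
    have "fst (\<psi> (row x (e (a, b)))) \<in> M"
      using \<psi>_in[OF row_in[OF x e_in[OF a b]]] by auto
    moreover have "snd (\<psi> (row x a)) b \<in> K" using \<psi>a(2) b by auto
    ultimately show "(\<lambda>b\<in>K. snd (e' (encode x (e (a, b))))) b = snd (\<psi> (row x a)) b"
      using a b by (simp add: encode_apply)
  next
    have "snd (e' (encode x (e (a, b)))) \<in> K" if "b \<in> K" for b
      using e'_in[OF PiE_mem[OF encode_in[OF x] e_in[OF a that]]] by (simp add: mem_Times_iff)
    then show "(\<lambda>b\<in>K. snd (e' (encode x (e (a, b))))) \<in> K \<rightarrow>\<^sub>E K" by simp
  qed
  ultimately show ?thesis unfolding unpack_def by (simp add: prod_eq_iff)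
qed

lemma row_decode:
  assumes y: "y \<in> M \<rightarrow>\<^sub>E M" and a: "a \<in> M"
  shows "row (decode y) a = \<psi>' (unpack y a)"
proof (rule PiE_ext[OF _ \<psi>'_in[OF unpack_in[OF y a]]])
  show "row (decode y) a \<in> K \<rightarrow>\<^sub>E K" using row_in[OF decode_in[OF y] a] .
  show "row (decode y) a b = \<psi>' (unpack y a) b" if "b \<in> K" for b
    using a that by (simp add: row_def decode_apply)
qed

lemma decode_encode:
  assumes x: "x \<in> M \<rightarrow>\<^sub>E K"
  shows "decode (encode x) = x"
proof (rule PiE_ext[OF decode_in[OF encode_in[OF x]] x])
  fix c assume "c \<in> M"
  then obtain a b where ab: "a \<in> M" "b \<in> K" "c = e (a, b)" by (rule M_cases)
  then have "decode (encode x) c = \<psi>' (\<psi> (row x a)) b"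
    by (simp add: decode_apply unpack_encode[OF x])
  also have "\<dots> = x c" using ab \<psi>'_\<psi>[OF row_in[OF x ab(1)]] by (simp add: row_def)
  finally show "decode (encode x) c = x c" .
qed

lemma encode_decode:
  assumes y: "y \<in> M \<rightarrow>\<^sub>E M"
  shows "encode (decode y) = y"
proof (rule PiE_ext[OF encode_in[OF decode_in[OF y]] y])
  fix c assume c: "c \<in> M"
  then obtain a b where ab: "a \<in> M" "b \<in> K" "c = e (a, b)" by (rule M_cases)
  have "encode (decode y) c = e (fst (unpack y c), snd (unpack y a) b)"
    using ab c \<psi>_\<psi>'[OF unpack_in[OF y c]] \<psi>_\<psi>'[OF unpack_in[OF y ab(1)]]
    by (simp add: encode_apply row_decode[OF y])
  also have "\<dots> = e (e' (y c))" using ab by (simp add: unpack_def)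
  also have "\<dots> = y c" using e_e'[OF PiE_mem[OF y c]] .
  finally show "encode (decode y) c = y c" .
qed

lemma row_locally_constant:
  assumes "box_locally_constant k K K \<phi>" "a \<in> M"
  shows "box_locally_constant k M K (\<lambda>x. \<phi> (row x a))"
  unfolding row_def
  using box_locally_constant_reindex[OF assms(1), of "\<lambda>b. e (a, b)" M "\<lambda>u. u" K] e_in assms(2)
  by blast

lemma encode_locally_constant:
  assumes "c \<in> M"
  shows "box_locally_constant k M K (\<lambda>x. encode x c)"
proof -
  obtain a b where ab: "a \<in> M" "b \<in> K" "c = e (a, b)" using M_cases[OF assms] .
  have "box_locally_constant k M K (\<lambda>x. e (fst (\<psi> (row x c)), snd (\<psi> (row x a)) b))"
    using box_locally_constant_bind[OF card(1,2) row_locally_constant[OF fst_\<psi>_locally_constant assms]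
        box_locally_constant_comp[OF row_locally_constant[OF snd_\<psi>_locally_constant[OF ab(2)] ab(1)]]] .
  then show ?thesis using ab by (simp add: encode_apply)
qed

lemma decode_locally_constant:
  assumes "c \<in> M"
  shows "box_locally_constant k M M (\<lambda>y. decode y c)"
proof -
  obtain a b where ab: "a \<in> M" "b \<in> K" "c = e (a, b)" using M_cases[OF assms] .
  have e'_fst: "fst (e' u) \<in> M" and e'_snd: "snd (e' u) \<in> K" if "u \<in> M" for u
    using e'_in[OF that] by (auto simp: mem_Times_iff)
  have "(\<lambda>b'. e (a, b')) ` K \<subseteq> M" "(\<lambda>u. snd (e' u)) ` M \<subseteq> K"
    using e_in[OF ab(1)] e'_snd by auto
  then have fixed_head: "box_locally_constant k M M (\<lambda>y. \<psi>' (m, \<lambda>b'\<in>K. snd (e' (y (e (a, b'))))) b)"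
    if "m \<in> M" for m
    by (rule box_locally_constant_reindex[OF \<psi>'_locally_constant[OF that ab(2)]])
  have "box_locally_constant k M M (\<lambda>y. \<psi>' (fst (e' (y a)), \<lambda>b'\<in>K. snd (e' (y (e (a, b'))))) b)"
  proof (rule box_locally_constant_bind[OF card(1,2) box_locally_constant_coordinate[OF card(1,2) ab(1),
          where h = "\<lambda>u. fst (e' u)"], where \<rho> = "\<lambda>m y. \<psi>' (m, \<lambda>b'\<in>K. snd (e' (y (e (a, b'))))) b"])
    fix y assume "y \<in> M \<rightarrow>\<^sub>E M"
    then show "box_locally_constant k M M (\<lambda>y'. \<psi>' (fst (e' (y a)), \<lambda>b'\<in>K. snd (e' (y' (e (a, b'))))) b)"
      using fixed_head e'_fst[OF PiE_mem[OF _ ab(1)]] by blast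
  qed
  then show ?thesis using ab by (simp add: decode_apply unpack_def)
qed

lemma homeomorphic: "box_top M K k homeomorphic_space box_top M M k"
  using homeomorphic_box_topI[OF card encode_in decode_in decode_encode encode_decode
      encode_locally_constant decode_locally_constant] .

end

section \<open>Splitting a discrete factor off \<open>\<kappa>^\<kappa>\<close>\<close>

lemma box_splits_off_bij:
  assumes k: "Card_order k" "\<not> finite (Field k)" "regularCard k"
    and \<phi>: "box_splits_off k K L \<phi> \<phi>'"
    and h: "bij_betw h (M \<times> L) L"
  defines "h' \<equiv> inv_into (M \<times> L) h"
  shows "box_splits_off k K M
      (\<lambda>r. (fst (h' (fst (\<phi> r))), \<phi>' (snd (h' (fst (\<phi> r))), snd (\<phi> r))))
      (\<lambda>p. \<phi>' (h (fst p, fst (\<phi> (snd p))), snd (\<phi> (snd p))))"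
    (is "box_splits_off k K M ?\<psi> ?\<psi>'")
proof -
  note \<phi>_in = box_splits_offD(1)[OF \<phi>] and \<phi>'_\<phi> = box_splits_offD(2)[OF \<phi>]
    and \<phi>'_in = box_splits_offD(3)[OF \<phi>] and \<phi>_\<phi>' = box_splits_offD(4)[OF \<phi>]
    and fst_loc = box_splits_offD(5)[OF \<phi>] and snd_loc = box_splits_offD(6)[OF \<phi>]
    and \<phi>'_loc = box_splits_offD(7)[OF \<phi>]
  have h_in: "\<And>p. p \<in> M \<times> L \<Longrightarrow> h p \<in> L" and h'_h: "\<And>p. p \<in> M \<times> L \<Longrightarrow> h' (h p) = p"
    and h'_in: "\<And>l. l \<in> L \<Longrightarrow> h' l \<in> M \<times> L" and h_h': "\<And>l. l \<in> L \<Longrightarrow> h (h' l) = l"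
    unfolding h'_def
    using bij_betw_apply[OF h] bij_betw_inv_into_left[OF h] bij_betw_apply[OF bij_betw_inv_into[OF h]]
      bij_betw_inv_into_right[OF h] by blast+
  have \<phi>_mem: "fst (\<phi> r) \<in> L" "snd (\<phi> r) \<in> K \<rightarrow>\<^sub>E K" if "r \<in> K \<rightarrow>\<^sub>E K" for r
    using \<phi>_in[OF that] by (auto simp: mem_Times_iff)
  have \<phi>'_snd_loc: "box_locally_constant k K K (\<lambda>r. \<phi>' (l, snd (\<phi> r)) b)" if "l \<in> L" "b \<in> K" for l b
    by (rule box_locally_constant_compose[OF k \<phi>'_loc[OF that]]) (use \<phi>_mem snd_loc in auto)
  have inverse1: "?\<psi> r \<in> M \<times> (K \<rightarrow>\<^sub>E K) \<and> ?\<psi>' (?\<psi> r) = r" if r: "r \<in> K \<rightarrow>\<^sub>E K" for r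
  proof
    have h'r: "h' (fst (\<phi> r)) \<in> M \<times> L" using h'_in \<phi>_mem(1)[OF r] .
    then show "?\<psi> r \<in> M \<times> (K \<rightarrow>\<^sub>E K)"
      using \<phi>'_in \<phi>_mem(2)[OF r] by (auto simp: mem_Times_iff)
    have "\<phi> (\<phi>' (snd (h' (fst (\<phi> r))), snd (\<phi> r))) = (snd (h' (fst (\<phi> r))), snd (\<phi> r))"
      using \<phi>_\<phi>' h'r \<phi>_mem(2)[OF r] by (auto simp: mem_Times_iff)
    then show "?\<psi>' (?\<psi> r) = r"
      using h_h'[OF \<phi>_mem(1)[OF r]] \<phi>'_\<phi>[OF r] by simp
  qed
  have inverse2: "?\<psi>' p \<in> K \<rightarrow>\<^sub>E K \<and> ?\<psi> (?\<psi>' p) = p" if p: "p \<in> M \<times> (K \<rightarrow>\<^sub>E K)" for p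
  proof
    have hp: "h (fst p, fst (\<phi> (snd p))) \<in> L" "h' (h (fst p, fst (\<phi> (snd p)))) = (fst p, fst (\<phi> (snd p)))"
      using h_in h'_h p \<phi>_mem(1) by (auto simp: mem_Times_iff)
    then show "?\<psi>' p \<in> K \<rightarrow>\<^sub>E K"
      using \<phi>'_in \<phi>_mem(2) p by (auto simp: mem_Times_iff)
    have "\<phi> (?\<psi>' p) = (h (fst p, fst (\<phi> (snd p))), snd (\<phi> (snd p)))"
      using \<phi>_\<phi>' hp(1) p \<phi>_mem(2) by (auto simp: mem_Times_iff)
    then show "?\<psi> (?\<psi>' p) = p"
      using hp(2) \<phi>'_\<phi> p by (auto simp: mem_Times_iff)
  qed
  have fst_\<psi>_loc: "box_locally_constant k K K (\<lambda>r. fst (?\<psi> r))"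
    using box_locally_constant_comp[OF fst_loc, of "\<lambda>l. fst (h' l)"] by simp
  have snd_\<psi>_loc: "box_locally_constant k K K (\<lambda>r. snd (?\<psi> r) b)" if b: "b \<in> K" for b
  proof -
    have "box_locally_constant k K K (\<lambda>r. \<phi>' (snd (h' (fst (\<phi> r))), snd (\<phi> r)) b)"
      by (rule box_locally_constant_bind[OF k(1,2) fst_loc, where \<rho> = "\<lambda>l r. \<phi>' (snd (h' l), snd (\<phi> r)) b"])
        (use \<phi>'_snd_loc[OF _ b] h'_in \<phi>_mem(1) in \<open>auto simp: mem_Times_iff\<close>)
    then show ?thesis by simp
  qed
  have \<psi>'_loc: "box_locally_constant k K K (\<lambda>z. ?\<psi>' (m, z) b)" if m: "m \<in> M" and b: "b \<in> K" for m b
  proof -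
    have "box_locally_constant k K K (\<lambda>z. \<phi>' (h (m, fst (\<phi> z)), snd (\<phi> z)) b)"
      by (rule box_locally_constant_bind[OF k(1,2) fst_loc, where \<rho> = "\<lambda>l z. \<phi>' (h (m, l), snd (\<phi> z)) b"])
        (use \<phi>'_snd_loc[OF _ b] h_in m \<phi>_mem(1) in auto)
    then show ?thesis by simp
  qed
  show ?thesis
    unfolding box_splits_off_def
  proof (intro conjI ballI)
    fix r assume "r \<in> K \<rightarrow>\<^sub>E K"
    then show "?\<psi> r \<in> M \<times> (K \<rightarrow>\<^sub>E K)" "?\<psi>' (?\<psi> r) = r" using inverse1 by blast+
  next
    fix p assume "p \<in> M \<times> (K \<rightarrow>\<^sub>E K)"
    then show "?\<psi>' p \<in> K \<rightarrow>\<^sub>E K" "?\<psi> (?\<psi>' p) = p" using inverse2 by blast+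
  qed (use fst_\<psi>_loc snd_\<psi>_loc \<psi>'_loc in blast)+
qed

text \<open>\<open>r\<close> is coded by \<open>x = r c0\<close>, by \<open>r\<close> on \<open>S x\<close>, and by the remaining values of \<open>r\<close>
  re-indexed along the bijection \<open>b x\<close> from \<open>K\<close> onto the rest.\<close>
locale shift_coding =
  fixes k :: "'c rel" and K :: "'k set" and c0 :: 'k and S :: "'k \<Rightarrow> 'k set" and b :: "'k \<Rightarrow> 'k \<Rightarrow> 'k"
  assumes card: "Card_order k" "\<not> finite (Field k)" "regularCard k"
    and c0: "c0 \<in> K"
    and S_sub: "\<And>x. x \<in> K \<Longrightarrow> S x \<subseteq> K - {c0}"
    and S_small: "\<And>x. x \<in> K \<Longrightarrow> |S x| <o k"
    and b: "\<And>x. x \<in> K \<Longrightarrow> bij_betw (b x) K (K - insert c0 (S x))"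
begin

abbreviation b' :: "'k \<Rightarrow> 'k \<Rightarrow> 'k" where
  "b' x \<equiv> inv_into K (b x)"

lemma b_in: "x \<in> K \<Longrightarrow> y \<in> K \<Longrightarrow> b x y \<in> K - insert c0 (S x)"
  using bij_betw_apply[OF b] by blast

lemma b'_b: "x \<in> K \<Longrightarrow> y \<in> K \<Longrightarrow> b' x (b x y) = y"
  using bij_betw_inv_into_left[OF b] by blast

lemma b'_in: "x \<in> K \<Longrightarrow> i \<in> K - insert c0 (S x) \<Longrightarrow> b' x i \<in> K"
  using bij_betw_apply[OF bij_betw_inv_into[OF b]] by blast

lemma b_b': "x \<in> K \<Longrightarrow> i \<in> K - insert c0 (S x) \<Longrightarrow> b x (b' x i) = i"
  using bij_betw_inv_into_right[OF b] by blast

definition \<Lambda> :: "('k \<times> ('k \<Rightarrow> 'k)) set" where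
  "\<Lambda> = (SIGMA x:K. S x \<rightarrow>\<^sub>E K)"

definition shift_code :: "('k \<Rightarrow> 'k) \<Rightarrow> ('k \<times> ('k \<Rightarrow> 'k)) \<times> ('k \<Rightarrow> 'k)" where
  "shift_code r = ((r c0, restrict r (S (r c0))), \<lambda>y\<in>K. r (b (r c0) y))"

definition shift_decode :: "('k \<times> ('k \<Rightarrow> 'k)) \<times> ('k \<Rightarrow> 'k) \<Rightarrow> 'k \<Rightarrow> 'k" where
  "shift_decode p = (case p of ((x, s), z) \<Rightarrow>
     \<lambda>i\<in>K. if i = c0 then x else if i \<in> S x then s i else z (b' x i))"

lemma shift_code_in:
  assumes r: "r \<in> K \<rightarrow>\<^sub>E K"
  shows "shift_code r \<in> \<Lambda> \<times> (K \<rightarrow>\<^sub>E K)"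
proof -
  have rc: "r c0 \<in> K" using r c0 by blast
  have "restrict r (S (r c0)) \<in> S (r c0) \<rightarrow>\<^sub>E K" using r S_sub[OF rc] by auto
  moreover have "(\<lambda>y\<in>K. r (b (r c0) y)) \<in> K \<rightarrow>\<^sub>E K" using r b_in[OF rc] by auto
  ultimately show ?thesis unfolding shift_code_def \<Lambda>_def using rc by simp
qed

lemma shift_decode_in:
  assumes p: "p \<in> \<Lambda> \<times> (K \<rightarrow>\<^sub>E K)"
  shows "shift_decode p \<in> K \<rightarrow>\<^sub>E K"
proof -
  obtain x s z where p': "p = ((x, s), z)" "x \<in> K" "s \<in> S x \<rightarrow>\<^sub>E K" "z \<in> K \<rightarrow>\<^sub>E K"
    using p unfolding \<Lambda>_def by auto
  have "z (b' x i) \<in> K" if "i \<in> K" "i \<noteq> c0" "i \<notin> S x" for i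
    using p'(4) b'_in[OF p'(2)] that by blast
  then show ?thesis unfolding shift_decode_def p'(1) using p'(2,3) by auto
qed

lemma shift_decode_code:
  assumes r: "r \<in> K \<rightarrow>\<^sub>E K"
  shows "shift_decode (shift_code r) = r"
proof (rule PiE_ext[OF shift_decode_in[OF shift_code_in[OF r]] r])
  have rc: "r c0 \<in> K" using r c0 by blast
  fix i assume i: "i \<in> K"
  show "shift_decode (shift_code r) i = r i"
  proof (cases "i = c0 \<or> i \<in> S (r c0)")
    case True
    then show ?thesis unfolding shift_decode_def shift_code_def using i by auto
  next
    case False
    then have "i \<in> K - insert c0 (S (r c0))" using i by blast
    then show ?thesis
      unfolding shift_decode_def shift_code_def using i False b'_in[OF rc] b_b'[OF rc] by simp
  qed
qed

lemma shift_code_decode: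
  assumes p: "p \<in> \<Lambda> \<times> (K \<rightarrow>\<^sub>E K)"
  shows "shift_code (shift_decode p) = p"
proof -
  obtain x s z where p': "p = ((x, s), z)" "x \<in> K" "s \<in> S x \<rightarrow>\<^sub>E K" "z \<in> K \<rightarrow>\<^sub>E K"
    using p unfolding \<Lambda>_def by auto
  define r where "r = shift_decode p"
  have r: "r \<in> K \<rightarrow>\<^sub>E K" unfolding r_def by (rule shift_decode_in[OF p])
  have rc: "r c0 = x" unfolding r_def shift_decode_def p'(1) using c0 by simp
  have "restrict r (S x) = s"
  proof (rule PiE_ext[OF _ p'(3)])
    show "restrict r (S x) \<in> S x \<rightarrow>\<^sub>E K" using r S_sub[OF p'(2)] by auto
    show "restrict r (S x) i = s i" if "i \<in> S x" for i
      using that S_sub[OF p'(2)] unfolding r_def shift_decode_def p'(1) by auto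
  qed
  moreover have "(\<lambda>y\<in>K. r (b x y)) = z"
  proof (rule PiE_ext[OF _ p'(4)])
    show "(\<lambda>y\<in>K. r (b x y)) \<in> K \<rightarrow>\<^sub>E K" using r b_in[OF p'(2)] by auto
    show "(\<lambda>y\<in>K. r (b x y)) y = z y" if "y \<in> K" for y
      using that b_in[OF p'(2) that] b'_b[OF p'(2) that]
      unfolding r_def shift_decode_def p'(1) by auto
  qed
  ultimately have "shift_code r = p" unfolding shift_code_def rc p'(1) by simp
  then show ?thesis unfolding r_def .
qed

lemma fst_shift_code_locally_constant: "box_locally_constant k K K (\<lambda>r. fst (shift_code r))"
proof -
  have "box_locally_constant k K K (\<lambda>r. (r c0, restrict r (S (r c0))))"
  proof (rule box_locally_constant_bind[OF card(1,2) box_locally_constant_coordinate[OF card(1,2) c0,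
          where h = "\<lambda>u. u"], where \<rho> = "\<lambda>x r. (x, restrict r (S x))"])
    fix r assume "r \<in> K \<rightarrow>\<^sub>E K"
    then have "r c0 \<in> K" using c0 by blast
    then show "box_locally_constant k K K (\<lambda>r'. (r c0, restrict r' (S (r c0))))"
      using S_sub S_small by (intro box_locally_constant_comp[OF box_locally_constant_restrict]) blast+
  qed
  then show ?thesis unfolding shift_code_def by simp
qed

lemma snd_shift_code_locally_constant:
  assumes y: "y \<in> K"
  shows "box_locally_constant k K K (\<lambda>r. snd (shift_code r) y)"
proof -
  have "box_locally_constant k K K (\<lambda>r. r (b (r c0) y))"
  proof (rule box_locally_constant_bind[OF card(1,2) box_locally_constant_coordinate[OF card(1,2) c0,
          where h = "\<lambda>u. u"], where \<rho> = "\<lambda>x r. r (b x y)"])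
    fix r assume "r \<in> K \<rightarrow>\<^sub>E K"
    then have "b (r c0) y \<in> K" using c0 b_in y by blast
    then show "box_locally_constant k K K (\<lambda>r'. r' (b (r c0) y))"
      by (rule box_locally_constant_coordinate[OF card(1,2), where h = "\<lambda>u. u"])
  qed
  then show ?thesis unfolding shift_code_def using y by simp
qed

lemma shift_decode_locally_constant:
  assumes l: "l \<in> \<Lambda>" and y: "y \<in> K"
  shows "box_locally_constant k K K (\<lambda>z. shift_decode (l, z) y)"
proof -
  obtain x s where l': "l = (x, s)" "x \<in> K" "s \<in> S x \<rightarrow>\<^sub>E K" using l unfolding \<Lambda>_def by auto
  show ?thesis
  proof (cases "y = c0 \<or> y \<in> S x")
    case True
    then show ?thesis
      unfolding shift_decode_def l'(1) using y
      by (cases "y = c0") (simp_all add: box_locally_constant_const[OF card(1,2)])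
  next
    case False
    then have "b' x y \<in> K" using b'_in[OF l'(2)] y by blast
    then show ?thesis
      unfolding shift_decode_def l'(1) using y False
      by (simp add: box_locally_constant_coordinate[OF card(1,2), where h = "\<lambda>u. u"])
  qed
qed

lemma box_splits_off: "box_splits_off k K \<Lambda> shift_code shift_decode"
  unfolding box_splits_off_def
  by (intro conjI ballI shift_code_in shift_decode_code shift_decode_in shift_code_decode
      fst_shift_code_locally_constant snd_shift_code_locally_constant shift_decode_locally_constant)

end

section \<open>Counting below \<open>2^<\<kappa>\<close>\<close>

lemma card_of_ordLess_embeds_underS:
  assumes rk: "Card_order rk" "\<not> finite (Field rk)" "regularCard rk"
    and B: "|B| <o rk"
  obtains d \<iota> where "d \<in> Field rk" "inj_on \<iota> B" "\<iota> ` B \<subseteq> underS rk d"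
proof -
  obtain B' where B': "B' < Field rk" "|B| =o |B'|" "|B'| <o rk"
    using internalize_card_of_ordLess[of B rk] B by blast
  obtain \<iota> where \<iota>: "bij_betw \<iota> B B'" using B'(2) card_of_ordIso by blast
  obtain d where d: "d \<in> Field rk" "B' \<subseteq> underS rk d"
    using regularCard_underS_bound[OF rk _ B'(3)] B'(1) by blast
  show ?thesis
  proof (rule that[OF d(1)])
    show "inj_on \<iota> B" using bij_betw_imp_inj_on[OF \<iota>] .
    show "\<iota> ` B \<subseteq> underS rk d" using bij_betw_imp_surj_on[OF \<iota>] d(2) by simp
  qed
qed

lemma underS_inject:
  assumes "Card_order rk" "a \<in> Field rk" "b \<in> Field rk" "underS rk a = underS rk b"
  shows "a = b"
proof -
  have "Well_order rk" using assms(1) card_order_on_well_order_on by blast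
  then have lo: "Linear_order rk" unfolding well_order_on_def by (rule conjunct1)
  have "(a, b) \<in> rk" "(b, a) \<in> rk"
    using underS_incl_iff[OF lo assms(2,3)] underS_incl_iff[OF lo assms(3,2)] assms(4) by simp_all
  with wo_rel.ANTISYM[OF Card_order_wo_rel[OF assms(1)]] show ?thesis by (rule antisymD)
qed

definition two_less_length :: "'k rel \<Rightarrow> ('k \<Rightarrow> bool option) \<Rightarrow> 'k" where
  "two_less_length rk f = (SOME a. a \<in> Field rk \<and> dom f = underS rk a)"

lemma two_less_length:
  assumes "f \<in> two_less rk"
  shows "two_less_length rk f \<in> Field rk" "dom f = underS rk (two_less_length rk f)"
proof -
  have "\<exists>a. a \<in> Field rk \<and> dom f = underS rk a" using assms unfolding two_less_def by blast
  then show "two_less_length rk f \<in> Field rk" "dom f = underS rk (two_less_length rk f)"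
    unfolding two_less_length_def by (metis (mono_tags, lifting) someI_ex)+
qed

lemma card_of_Field_ordLeq_two_less:
  assumes rk: "Card_order rk"
  shows "|Field rk| \<le>o |two_less rk|"
proof -
  define f where "f a = (\<lambda>i. if i \<in> underS rk a then Some True else None)" for a
  have dom_f: "dom (f a) = underS rk a" for a unfolding f_def by (auto simp: dom_def)
  have "f ` Field rk \<subseteq> two_less rk" unfolding two_less_def using dom_f by blast
  moreover have "inj_on f (Field rk)"
    using underS_inject[OF rk] dom_f by (metis inj_onI)
  ultimately show ?thesis using card_of_ordLeq by blast
qed

lemma two_less_infinite:
  assumes "Card_order rk" "\<not> finite (Field rk)"
  shows "\<not> finite (two_less rk)"
  using card_of_ordLeq_infinite[OF card_of_Field_ordLeq_two_less[OF assms(1)] assms(2)] .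

lemma card_of_Pow_ordLeq_two_less:
  assumes rk: "Card_order rk" "\<not> finite (Field rk)" "regularCard rk"
    and Z: "|Z| <o rk"
  shows "|Pow Z| \<le>o |two_less rk|"
proof -
  obtain c \<iota> where c: "c \<in> Field rk" "inj_on \<iota> Z" "\<iota> ` Z \<subseteq> underS rk c"
    using card_of_ordLess_embeds_underS[OF rk Z] .
  define F where "F P = (\<lambda>i. if i \<in> underS rk c then Some (i \<in> \<iota> ` P) else None)" for P
  have "F ` Pow Z \<subseteq> two_less rk"
    unfolding two_less_def F_def using c(1) by (auto simp: dom_def)
  moreover have "inj_on F (Pow Z)"
  proof (rule inj_onI)
    fix P P' assume P: "P \<in> Pow Z" and P': "P' \<in> Pow Z" and eq: "F P = F P'"
    have "i \<in> \<iota> ` P \<longleftrightarrow> i \<in> \<iota> ` P'" if "i \<in> underS rk c" for i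
      using fun_cong[OF eq, of i] that unfolding F_def by simp
    then have "\<iota> ` P = \<iota> ` P'" using P P' c(3) by blast
    then show "P = P'" using inj_on_image_eq_iff[OF c(2)] P P' by blast
  qed
  ultimately show ?thesis using card_of_ordLeq by blast
qed

definition tagged_graphs :: "('f \<Rightarrow> 'x) \<Rightarrow> ('f \<Rightarrow> 'i \<Rightarrow> 'v option) \<Rightarrow> 'f set \<Rightarrow> ('x \<times> ('i \<times> 'v) option) set"
  where "tagged_graphs \<iota> g B =
    {(\<iota> f, None) | f. f \<in> B} \<union> {(\<iota> f, Some (i, v)) | f i v. f \<in> B \<and> g f i = Some v}"

lemma mem_tagged_graphs_None: "(x, None) \<in> tagged_graphs \<iota> g B \<longleftrightarrow> (\<exists>f\<in>B. x = \<iota> f)"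
  unfolding tagged_graphs_def by blast

lemma mem_tagged_graphs_Some:
  "(x, Some (i, v)) \<in> tagged_graphs \<iota> g B \<longleftrightarrow> (\<exists>f\<in>B. x = \<iota> f \<and> g f i = Some v)"
  unfolding tagged_graphs_def by blast

lemma tagged_graphs_subset:
  assumes g: "inj_on g D" "B1 \<subseteq> D" "B2 \<subseteq> D"
    and \<iota>: "inj_on \<iota>1 B1" "inj_on \<iota>2 B2"
    and eq: "tagged_graphs \<iota>1 g B1 = tagged_graphs \<iota>2 g B2"
  shows "B1 \<subseteq> B2"
proof
  fix f1 assume f1: "f1 \<in> B1"
  then obtain f2 where f2: "f2 \<in> B2" "\<iota>1 f1 = \<iota>2 f2"
    using eq mem_tagged_graphs_None[of "\<iota>1 f1"] by metis
  have "g f1 i = Some v \<longleftrightarrow> g f2 i = Some v" for i v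
  proof
    assume "g f1 i = Some v"
    then obtain f where "f \<in> B2" "\<iota>1 f1 = \<iota>2 f" "g f i = Some v"
      using eq f1 mem_tagged_graphs_Some[of "\<iota>1 f1" i v] by metis
    then show "g f2 i = Some v" using inj_onD[OF \<iota>(2)] f2 by metis
  next
    assume "g f2 i = Some v"
    then obtain f where "f \<in> B1" "\<iota>2 f2 = \<iota>1 f" "g f i = Some v"
      using eq f2(1) mem_tagged_graphs_Some[of "\<iota>2 f2" i v] by metis
    then show "g f1 i = Some v" using inj_onD[OF \<iota>(1)] f1 f2(2) by metis
  qed
  then have "g f1 = g f2" by (intro ext) (metis not_Some_eq)
  then show "f1 \<in> B2" using inj_onD[OF g(1)] f1 f2(1) g(2,3) by (metis subsetD)
qed

lemma card_of_Field_Times_ordLeq_two_less: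
  assumes "Card_order rk" "\<not> finite (Field rk)"
  shows "|Field rk \<times> Field rk| \<le>o |two_less rk|"
  using ordIso_ordLeq_trans[OF card_of_Times_same_infinite[OF assms(2)]
      card_of_Field_ordLeq_two_less[OF assms(1)]] .

definition tag_space :: "'k rel \<Rightarrow> 'k \<Rightarrow> 'k \<Rightarrow> ('k \<times> ('k \<times> bool) option) set" where
  "tag_space rk c d = underS rk d \<times> insert None (Some ` (underS rk c \<times> UNIV))"

lemma card_of_tag_space_ordLess:
  assumes rk: "Card_order rk" "\<not> finite (Field rk)" "regularCard rk"
    and "c \<in> Field rk" "d \<in> Field rk"
  shows "|tag_space rk c d| <o rk"
proof -
  have st: "stable rk" by (rule regularCard_stable[OF rk])
  have bool: "|UNIV :: bool set| <o rk" by (rule card_of_finite_ordLess[OF rk(1,2)]) simp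
  show ?thesis unfolding tag_space_def
    by (intro card_of_Times_ordLess[OF st] card_of_insert_ordLess[OF rk(1,2)] card_of_image_ordLess
        card_of_Times_ordLess[OF st _ bool] card_of_underS[OF rk(1)] assms(4,5))
qed

lemma tagged_graphs_subset_tag_space:
  assumes rk: "Card_order rk"
    and B: "B \<subseteq> two_less rk" "two_less_length rk ` B \<subseteq> underS rk c" "\<iota> ` B \<subseteq> underS rk d"
  shows "tagged_graphs \<iota> (\<lambda>f. f) B \<subseteq> tag_space rk c d"
proof
  have wo: "trans rk" "antisym rk" using Card_order_wo_rel[OF rk] wo_rel.TRANS wo_rel.ANTISYM by blast+
  fix q assume "q \<in> tagged_graphs \<iota> (\<lambda>f. f) B"
  then consider f where "f \<in> B" "q = (\<iota> f, None)"
    | f i v where "f \<in> B" "f i = Some v" "q = (\<iota> f, Some (i, v))"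
    unfolding tagged_graphs_def by blast
  then show "q \<in> tag_space rk c d"
  proof cases
    case 1
    then show ?thesis using B(3) unfolding tag_space_def by blast
  next
    case (2 f i v)
    have "i \<in> underS rk (two_less_length rk f)"
      using two_less_length(2)[of f rk] B(1) 2(1) domI[of f i v, OF 2(2)] by blast
    moreover have "two_less_length rk f \<in> underS rk c" using B(2) 2(1) by blast
    then have "underS rk (two_less_length rk f) \<subseteq> underS rk c"
      using underS_incr[OF wo] unfolding underS_def by blast
    ultimately show ?thesis using B(3) 2 unfolding tag_space_def by blast
  qed
qed

lemma small_subset_of_two_less_tagging:
  assumes rk: "Card_order rk" "\<not> finite (Field rk)" "regularCard rk"
    and B: "B \<subseteq> two_less rk" "|B| <o rk"
  shows "\<exists>c d \<iota>. c \<in> Field rk \<and> d \<in> Field rk \<and> two_less_length rk ` B \<subseteq> underS rk c \<and>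
    inj_on \<iota> B \<and> \<iota> ` B \<subseteq> underS rk d"
proof -
  have "two_less_length rk ` B \<subseteq> Field rk" using two_less_length(1) B(1) by blast
  then obtain c where "c \<in> Field rk" "two_less_length rk ` B \<subseteq> underS rk c"
    using regularCard_underS_bound[OF rk _ card_of_image_ordLess[OF B(2)]] by blast
  moreover obtain d \<iota> where "d \<in> Field rk" "inj_on \<iota> B" "\<iota> ` B \<subseteq> underS rk d"
    using card_of_ordLess_embeds_underS[OF rk B(2)] .
  ultimately show ?thesis by blast
qed

lemma card_of_small_subsets_of_two_less:
  fixes rk :: "'k rel"
  assumes rk: "Card_order rk" "\<not> finite (Field rk)" "regularCard rk"
  shows "|{B. B \<subseteq> two_less rk \<and> |B| <o rk}| \<le>o |two_less rk|"
proof -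
  let ?T = "two_less rk" and ?Small = "{B. B \<subseteq> two_less rk \<and> |B| <o rk}"
  have "\<forall>B\<in>?Small. \<exists>cd \<iota>. cd \<in> Field rk \<times> Field rk \<and> two_less_length rk ` B \<subseteq> underS rk (fst cd)
      \<and> inj_on \<iota> B \<and> \<iota> ` B \<subseteq> underS rk (snd cd)"
    using small_subset_of_two_less_tagging[OF rk] by fastforce
  then obtain cd where "\<forall>B\<in>?Small. \<exists>\<iota>. cd B \<in> Field rk \<times> Field rk \<and>
      two_less_length rk ` B \<subseteq> underS rk (fst (cd B)) \<and> inj_on \<iota> B \<and> \<iota> ` B \<subseteq> underS rk (snd (cd B))"
    by (rule bchoice[THEN exE])
  then obtain \<iota> where "\<forall>B\<in>?Small. cd B \<in> Field rk \<times> Field rk \<and>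
      two_less_length rk ` B \<subseteq> underS rk (fst (cd B)) \<and> inj_on (\<iota> B) B \<and> \<iota> B ` B \<subseteq> underS rk (snd (cd B))"
    by (rule bchoice[THEN exE])
  note good = bspec[OF this]
  define code where "code B = (cd B, tagged_graphs (\<iota> B) (\<lambda>f. f) B)" for B
  let ?Codes = "SIGMA cd:Field rk \<times> Field rk. Pow (tag_space rk (fst cd) (snd cd))"
  have "code B \<in> ?Codes" if B: "B \<in> ?Small" for B
  proof -
    have "tagged_graphs (\<iota> B) (\<lambda>f. f) B \<subseteq> tag_space rk (fst (cd B)) (snd (cd B))"
      using tagged_graphs_subset_tag_space[OF rk(1)] good[OF B] B by simp
    then show ?thesis using good[OF B] unfolding code_def by simp
  qed
  then have "code ` ?Small \<subseteq> ?Codes" by blast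
  moreover have "inj_on code ?Small"
  proof (rule inj_onI)
    fix B1 B2 assume B: "B1 \<in> ?Small" "B2 \<in> ?Small" and "code B1 = code B2"
    then have eq: "tagged_graphs (\<iota> B1) (\<lambda>f. f) B1 = tagged_graphs (\<iota> B2) (\<lambda>f. f) B2"
      unfolding code_def by simp
    have sub: "B1 \<subseteq> ?T" "B2 \<subseteq> ?T" using B by simp_all
    have inj: "inj_on (\<iota> B1) B1" "inj_on (\<iota> B2) B2" using good[OF B(1)] good[OF B(2)] by simp_all
    have "B1 \<subseteq> B2" by (rule tagged_graphs_subset[OF inj_on_id2 sub inj eq])
    moreover have "B2 \<subseteq> B1" by (rule tagged_graphs_subset[OF inj_on_id2 sub(2,1) inj(2,1) eq[symmetric]])
    ultimately show "B1 = B2" by (rule subset_antisym)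
  qed
  ultimately have "|?Small| \<le>o |?Codes|"
    unfolding card_of_ordLeq[symmetric] by blast
  moreover have "|?Codes| \<le>o |?T|"
    by (rule card_of_Sigma_ordLeq_infinite[OF two_less_infinite[OF rk(1,2)]
        card_of_Field_Times_ordLeq_two_less[OF rk(1,2)]])
      (auto intro: card_of_Pow_ordLeq_two_less[OF rk] card_of_tag_space_ordLess[OF rk])
  ultimately show ?thesis by (rule ordLeq_transitive)
qed

lemma card_of_small_subsets_ordLeq_two_less:
  assumes rk: "Card_order rk" "\<not> finite (Field rk)" "regularCard rk"
    and D: "|D| \<le>o |two_less rk|"
  shows "|{A. A \<subseteq> D \<and> |A| <o rk}| \<le>o |two_less rk|"
proof -
  obtain g where g: "inj_on g D" "g ` D \<subseteq> two_less rk"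
    using D unfolding card_of_ordLeq[symmetric] by blast
  have "image g ` {A. A \<subseteq> D \<and> |A| <o rk} \<subseteq> {B. B \<subseteq> two_less rk \<and> |B| <o rk}"
    using g(2) card_of_image_ordLess by blast
  moreover have "inj_on (image g) {A. A \<subseteq> D \<and> |A| <o rk}"
    by (rule inj_onI) (use inj_on_image_eq_iff[OF g(1)] in blast)
  ultimately have "|{A. A \<subseteq> D \<and> |A| <o rk}| \<le>o |{B. B \<subseteq> two_less rk \<and> |B| <o rk}|"
    unfolding card_of_ordLeq[symmetric] by blast
  then show ?thesis using card_of_small_subsets_of_two_less[OF rk] by (rule ordLeq_transitive)
qed

lemma card_of_small_partial_functions_ordLeq_two_less:
  fixes rk :: "'k rel" and D :: "'a set"
  assumes rk: "Card_order rk" "\<not> finite (Field rk)" "regularCard rk"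
    and D: "|D| \<le>o |two_less rk|"
  shows "|{(A, t). A \<subseteq> D \<and> |A| <o rk \<and> t \<in> A \<rightarrow>\<^sub>E Field rk}| \<le>o |two_less rk|"
proof -
  let ?P = "{(A, t). A \<subseteq> D \<and> |A| <o rk \<and> t \<in> A \<rightarrow>\<^sub>E Field rk}"
  define graph where "graph p = (\<lambda>a. (a, snd p a)) ` fst p" for p :: "'a set \<times> ('a \<Rightarrow> 'k)"
  have "graph p \<in> {G. G \<subseteq> D \<times> Field rk \<and> |G| <o rk}" if "p \<in> ?P" for p
    using that card_of_image_ordLess[of "fst p" rk] unfolding graph_def by auto
  then have "graph ` ?P \<subseteq> {G. G \<subseteq> D \<times> Field rk \<and> |G| <o rk}" by blast
  moreover have "inj_on graph ?P"
  proof (rule inj_onI)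
    fix p q assume p: "p \<in> ?P" and q: "q \<in> ?P" and eq: "graph p = graph q"
    have "fst p = fst q" using arg_cong[OF eq, of "image fst"] unfolding graph_def image_image by simp
    moreover have "snd p = snd q"
    proof (rule PiE_ext)
      show "snd p \<in> fst p \<rightarrow>\<^sub>E Field rk" "snd q \<in> fst p \<rightarrow>\<^sub>E Field rk"
        using p q \<open>fst p = fst q\<close> by auto
      fix a assume "a \<in> fst p"
      then have "(a, snd p a) \<in> graph q" using eq unfolding graph_def by blast
      then show "snd p a = snd q a" unfolding graph_def by blast
    qed
    ultimately show "p = q" by (rule prod_eqI)
  qed
  ultimately have "|?P| \<le>o |{G. G \<subseteq> D \<times> Field rk \<and> |G| <o rk}|"
    unfolding card_of_ordLeq[symmetric] by blast
  moreover have "|D \<times> Field rk| \<le>o |two_less rk|"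
    by (rule card_of_Sigma_ordLeq_infinite[OF two_less_infinite[OF rk(1,2)] D])
      (use card_of_Field_ordLeq_two_less[OF rk(1)] in blast)
  ultimately show ?thesis
    using card_of_small_subsets_ordLeq_two_less[OF rk] ordLeq_transitive by blast
qed

section \<open>A homeomorphism when \<open>\<mu> \<le> 2^<\<kappa>\<close>\<close>

lemma card_of_two_less_ordLeq_Sigma:
  assumes rk: "Card_order rk" and j: "inj_on j (Field rk)"
    and c: "c0 \<in> R" "c1 \<in> R" "c0 \<noteq> c1"
  shows "|two_less rk| \<le>o |SIGMA x:Field rk. j ` underS rk x \<rightarrow>\<^sub>E R|"
proof -
  let ?len = "two_less_length rk"
  have j_under: "inj_on j (underS rk x)" for x using inj_on_subset[OF j Order_Relation.underS_Field] .
  define code where "code f = (?len f, \<lambda>i\<in>j ` underS rk (?len f).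
      if f (inv_into (underS rk (?len f)) j i) = Some True then c1 else c0)" for f
  have "code ` two_less rk \<subseteq> (SIGMA x:Field rk. j ` underS rk x \<rightarrow>\<^sub>E R)"
    using two_less_length(1) c unfolding code_def by auto
  moreover have "inj_on code (two_less rk)"
  proof (rule inj_onI)
    fix f g assume f: "f \<in> two_less rk" and g: "g \<in> two_less rk" and eq: "code f = code g"
    have len: "?len f = ?len g" using eq unfolding code_def by simp
    show "f = g"
    proof
      fix u
      show "f u = g u"
      proof (cases "u \<in> underS rk (?len f)")
        case True
        have "inv_into (underS rk (?len f)) j (j u) = u" using inv_into_f_f[OF j_under True] .
        then have "(if f u = Some True then c1 else c0) = (if g u = Some True then c1 else c0)"
          using fun_cong[OF arg_cong[OF eq, of snd], of "j u"] True len unfolding code_def by simp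
        then have "f u = Some True \<longleftrightarrow> g u = Some True" using c(3) by (auto split: if_splits)
        moreover have "u \<in> dom f" "u \<in> dom g"
          using True two_less_length(2)[OF f] two_less_length(2)[OF g] len by auto
        ultimately show ?thesis by (metis (full_types) domD)
      next
        case False
        then have "u \<notin> dom f" "u \<notin> dom g"
          using two_less_length(2)[OF f] two_less_length(2)[OF g] len by auto
        then show ?thesis by (simp add: domIff)
      qed
    qed
  qed
  ultimately show ?thesis unfolding card_of_ordLeq[symmetric] by blast
qed

lemma exists_shift_coding:
  fixes rk :: "'k rel"
  assumes rk: "Card_order rk" "\<not> finite (Field rk)" "regularCard rk"
  obtains c0 j b where "shift_coding rk (Field rk) c0 (\<lambda>x. j ` underS rk x) b" "inj_on j (Field rk)"
proof -
  let ?K = "Field rk"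
  obtain c0 where c0: "c0 \<in> ?K" using infinite_imp_nonempty[OF rk(2)] by blast
  obtain j where j: "bij_betw j ?K (?K - {c0})" using infinite_imp_bij_betw[OF rk(2)] by blast
  let ?S = "\<lambda>x. j ` underS rk x"
  have S_sub: "?S x \<subseteq> ?K - {c0}" for x
    using image_mono[OF Order_Relation.underS_Field, of j rk x] bij_betw_imp_surj_on[OF j] by simp
  have S_small: "|?S x| <o rk" if "x \<in> ?K" for x
    by (rule card_of_image_ordLess[OF card_of_underS[OF rk(1) that]])
  have "\<forall>x\<in>?K. \<exists>bx. bij_betw bx ?K (?K - insert c0 (?S x))"
  proof
    fix x assume x: "x \<in> ?K"
    have "|insert c0 (?S x)| <o |?K|"
      by (rule card_of_ordLess_Field[OF rk(1) card_of_insert_ordLess[OF rk(1,2) S_small[OF x]]])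
    then have "|?K - insert c0 (?S x)| =o |?K|" by (rule card_of_Diff_ordLess_ordIso[OF rk(2)])
    then show "\<exists>bx. bij_betw bx ?K (?K - insert c0 (?S x))"
      by (rule card_of_ordIso[THEN iffD2, OF ordIso_symmetric])
  qed
  then obtain b where "\<forall>x\<in>?K. bij_betw (b x) ?K (?K - insert c0 (?S x))"
    by (rule bchoice[THEN exE])
  then have "shift_coding rk ?K c0 ?S b"
    by (intro shift_coding.intro rk c0 S_sub S_small) blast+
  then show ?thesis by (rule that[OF _ bij_betw_imp_inj_on[OF j]])
qed

lemma box_top_homeomorphic_if_ordLeq_two_less:
  fixes rk :: "'k rel" and M :: "'m set"
  assumes rk: "Card_order rk" "\<not> finite (Field rk)" "regularCard rk"
    and M: "\<not> finite M" "|Field rk| \<le>o |M|" "|M| \<le>o |two_less rk|"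
  shows "box_top M (Field rk) rk homeomorphic_space box_top M M rk"
proof -
  let ?K = "Field rk"
  obtain c0 j b where sc: "shift_coding rk ?K c0 (\<lambda>x. j ` underS rk x) b" and j: "inj_on j ?K"
    using exists_shift_coding[OF rk] .
  interpret sc: shift_coding rk ?K c0 "\<lambda>x. j ` underS rk x" b by (rule sc)
  have "\<not> finite (?K - {c0})" using rk(2) by simp
  then obtain c1 where c1: "c1 \<in> ?K" "c1 \<noteq> c0" using infinite_imp_nonempty by blast
  have "|two_less rk| \<le>o |sc.\<Lambda>|"
    unfolding sc.\<Lambda>_def by (rule card_of_two_less_ordLeq_Sigma[OF rk(1) j sc.c0 c1(1) c1(2)[symmetric]])
  then have M\<Lambda>: "|M| \<le>o |sc.\<Lambda>|" using M(3) ordLeq_transitive by blast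
  have "|M \<times> sc.\<Lambda>| =o |sc.\<Lambda>|"
    using card_of_Times_infinite[OF card_of_ordLeq_infinite[OF M\<Lambda> M(1)] _ M\<Lambda>] M(1) by auto
  then obtain h where h: "bij_betw h (M \<times> sc.\<Lambda>) sc.\<Lambda>" using card_of_ordIso[THEN iffD2] by blast
  have "|M \<times> ?K| =o |M|" using card_of_Times_infinite[OF M(1) infinite_imp_nonempty[OF rk(2)] M(2)] by blast
  then obtain e where e: "bij_betw e (M \<times> ?K) M" using card_of_ordIso[THEN iffD2] by blast
  show ?thesis
    using box_absorption.homeomorphic[OF box_absorption.intro[OF rk e
          box_splits_off_bij[OF rk sc.box_splits_off h]]] .
qed

section \<open>Disjoint open families in the box space\<close>

definition realized_restrictions ::
    "'k rel \<Rightarrow> 'i set \<Rightarrow> ('i \<Rightarrow> 'd \<Rightarrow> 'k) \<Rightarrow> 'd set \<Rightarrow> ('d set \<times> ('d \<Rightarrow> 'k)) set" where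
  "realized_restrictions rk I x P =
    {(A, t). A \<subseteq> P \<and> |A| <o rk \<and> t \<in> A \<rightarrow>\<^sub>E Field rk \<and> (\<exists>a\<in>I. \<forall>i\<in>A. x a i = t i)}"

definition extension_index :: "'i set \<Rightarrow> ('i \<Rightarrow> 'd \<Rightarrow> 'k) \<Rightarrow> 'd set \<times> ('d \<Rightarrow> 'k) \<Rightarrow> 'i" where
  "extension_index I x q = (SOME a. a \<in> I \<and> (\<forall>i\<in>fst q. x a i = snd q i))"

lemma extension_index:
  assumes "q \<in> realized_restrictions rk I x P"
  shows "extension_index I x q \<in> I" "\<forall>i\<in>fst q. x (extension_index I x q) i = snd q i"
proof -
  have "\<exists>a. a \<in> I \<and> (\<forall>i\<in>fst q. x a i = snd q i)"
    using assms unfolding realized_restrictions_def by auto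
  then have "extension_index I x q \<in> I \<and> (\<forall>i\<in>fst q. x (extension_index I x q) i = snd q i)"
    unfolding extension_index_def by (rule someI_ex)
  then show "extension_index I x q \<in> I" "\<forall>i\<in>fst q. x (extension_index I x q) i = snd q i"
    by simp_all
qed

lemma card_of_realized_restrictions:
  assumes rk: "Card_order rk" "\<not> finite (Field rk)" "regularCard rk"
    and P: "|P| \<le>o |two_less rk|"
  shows "|realized_restrictions rk I x P| \<le>o |two_less rk|"
proof -
  have "realized_restrictions rk I x P \<subseteq> {(A, t). A \<subseteq> P \<and> |A| <o rk \<and> t \<in> A \<rightarrow>\<^sub>E Field rk}"
    unfolding realized_restrictions_def by blast
  then show ?thesis
    using ordLeq_transitive[OF card_of_mono1 card_of_small_partial_functions_ordLeq_two_less[OF rk P]]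
    by blast
qed

text \<open>\<open>closure_stage rk I S x \<xi> z\<close>: the point \<open>z\<close> enters at stage \<open>\<xi>\<close> because it lies in
  the support of an index extending a small partial function on points of earlier stages.
  After \<open>\<kappa>\<close> stages this yields a set closed under such extensions, of size at most \<open>2^<\<kappa>\<close>.\<close>
inductive closure_stage :: "'k rel \<Rightarrow> 'i set \<Rightarrow> ('i \<Rightarrow> 'd set) \<Rightarrow> ('i \<Rightarrow> 'd \<Rightarrow> 'k) \<Rightarrow> 'k \<Rightarrow> 'd \<Rightarrow> bool"
  for rk I S x where
  "\<xi> \<in> Field rk \<Longrightarrow> \<forall>y\<in>A. \<exists>\<eta>\<in>underS rk \<xi>. closure_stage rk I S x \<eta> y \<Longrightarrow>
    |A| <o rk \<Longrightarrow> t \<in> A \<rightarrow>\<^sub>E Field rk \<Longrightarrow> \<exists>a\<in>I. \<forall>i\<in>A. x a i = t i \<Longrightarrow>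
    z \<in> S (extension_index I x (A, t)) \<Longrightarrow> closure_stage rk I S x \<xi> z"

lemma closure_stage_subset:
  "Collect (closure_stage rk I S x \<xi>) \<subseteq>
    (\<Union>q\<in>realized_restrictions rk I x (\<Union>\<eta>\<in>underS rk \<xi>. Collect (closure_stage rk I S x \<eta>)).
      S (extension_index I x q))"
proof
  fix z assume "z \<in> Collect (closure_stage rk I S x \<xi>)"
  then have "closure_stage rk I S x \<xi> z" by simp
  then show "z \<in> (\<Union>q\<in>realized_restrictions rk I x (\<Union>\<eta>\<in>underS rk \<xi>. Collect (closure_stage rk I S x \<eta>)).
      S (extension_index I x q))"
  proof (cases rule: closure_stage.cases)
    case (1 A t)
    then have "(A, t) \<in> realized_restrictions rk I x (\<Union>\<eta>\<in>underS rk \<xi>. Collect (closure_stage rk I S x \<eta>))"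
      unfolding realized_restrictions_def by blast
    then show ?thesis using 1(6) by blast
  qed
qed

lemma card_of_closure_stage:
  assumes rk: "Card_order rk" "\<not> finite (Field rk)" "regularCard rk"
    and S: "\<And>a. a \<in> I \<Longrightarrow> |S a| <o rk"
  shows "|Collect (closure_stage rk I S x \<xi>)| \<le>o |two_less rk|"
proof (induction \<xi> rule: wo_rel.well_order_induct[OF Card_order_wo_rel[OF rk(1)]])
  case (1 \<xi>)
  let ?T = "two_less rk"
  have T: "\<not> finite ?T" "|Field rk| \<le>o |?T|"
    using two_less_infinite[OF rk(1,2)] card_of_Field_ordLeq_two_less[OF rk(1)] by blast+
  have "|underS rk \<xi>| \<le>o |?T|"
    using ordLeq_transitive[OF card_of_mono1[OF Order_Relation.underS_Field] T(2)] .
  moreover have "\<forall>\<eta>\<in>underS rk \<xi>. |Collect (closure_stage rk I S x \<eta>)| \<le>o |?T|"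
    using 1 unfolding underS_def by blast
  ultimately have "|\<Union>\<eta>\<in>underS rk \<xi>. Collect (closure_stage rk I S x \<eta>)| \<le>o |?T|"
    by (rule card_of_UNION_ordLeq_infinite[OF T(1)])
  then have R: "|realized_restrictions rk I x (\<Union>\<eta>\<in>underS rk \<xi>. Collect (closure_stage rk I S x \<eta>))| \<le>o |?T|"
    by (rule card_of_realized_restrictions[OF rk])
  have "|S (extension_index I x q)| \<le>o |?T|"
    if "q \<in> realized_restrictions rk I x P" for q P
    using ordLess_imp_ordLeq[OF card_of_ordLess_Field[OF rk(1) S[OF extension_index(1)[OF that]]]]
      T(2) ordLeq_transitive by blast
  then have "|\<Union>q\<in>realized_restrictions rk I x (\<Union>\<eta>\<in>underS rk \<xi>. Collect (closure_stage rk I S x \<eta>)).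
      S (extension_index I x q)| \<le>o |?T|"
    by (intro card_of_UNION_ordLeq_infinite[OF T(1) R] ballI)
  moreover have "Collect (closure_stage rk I S x \<xi>) \<subseteq>
      (\<Union>q\<in>realized_restrictions rk I x (\<Union>\<eta>\<in>underS rk \<xi>. Collect (closure_stage rk I S x \<eta>)).
        S (extension_index I x q))"
    by (rule closure_stage_subset)
  ultimately show ?case using card_of_mono1 ordLeq_transitive by blast
qed

lemma incompatible_family_extension_index:
  assumes rk: "Card_order rk" "\<not> finite (Field rk)" "regularCard rk"
    and S: "\<And>a. a \<in> I \<Longrightarrow> |S a| <o rk"
    and x: "\<And>a i. a \<in> I \<Longrightarrow> i \<in> S a \<Longrightarrow> x a i \<in> Field rk"
    and incompatible: "\<And>a b. a \<in> I \<Longrightarrow> b \<in> I \<Longrightarrow> a \<noteq> b \<Longrightarrow> \<exists>i\<in>S a \<inter> S b. x a i \<noteq> x b i"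
    and a: "a \<in> I"
  shows "a \<in> extension_index I x ` realized_restrictions rk I x
    (\<Union>\<xi>\<in>Field rk. Collect (closure_stage rk I S x \<xi>))"
proof -
  let ?C = "\<Union>\<xi>\<in>Field rk. Collect (closure_stage rk I S x \<xi>)"
  define A where "A = S a \<inter> ?C"
  define t where "t = restrict (x a) A"
  have A: "|A| <o rk" unfolding A_def by (rule card_of_subset_ordLess[OF S[OF a]]) blast
  have t: "t \<in> A \<rightarrow>\<^sub>E Field rk" unfolding t_def A_def using x[OF a] by auto
  have q: "(A, t) \<in> realized_restrictions rk I x ?C"
    unfolding realized_restrictions_def using A t a unfolding A_def t_def by auto
  define a' where "a' = extension_index I x (A, t)"
  have a': "a' \<in> I" "\<forall>i\<in>A. x a' i = t i" using extension_index[OF q] unfolding a'_def by simp_all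
  have "\<forall>y\<in>A. \<exists>\<eta>. \<eta> \<in> Field rk \<and> closure_stage rk I S x \<eta> y" unfolding A_def by blast
  then obtain lv where lv: "\<forall>y\<in>A. lv y \<in> Field rk \<and> closure_stage rk I S x (lv y) y"
    by (rule bchoice[THEN exE])
  have "lv ` A \<subseteq> Field rk" using lv by blast
  then obtain \<xi> where \<xi>: "\<xi> \<in> Field rk" "lv ` A \<subseteq> underS rk \<xi>"
    using regularCard_underS_bound[OF rk _ card_of_image_ordLess[OF A]] by blast
  have "closure_stage rk I S x \<xi> z" if "z \<in> S a'" for z
  proof (rule closure_stage.intros[OF \<xi>(1) _ A t])
    show "\<forall>y\<in>A. \<exists>\<eta>\<in>underS rk \<xi>. closure_stage rk I S x \<eta> y" using lv \<xi>(2) by blast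
    show "\<exists>b\<in>I. \<forall>i\<in>A. x b i = t i" using a unfolding t_def by auto
    show "z \<in> S (extension_index I x (A, t))" using that unfolding a'_def .
  qed
  then have "S a' \<subseteq> ?C" using \<xi>(1) by blast
  have "a' = a"
  proof (rule ccontr)
    assume "a' \<noteq> a"
    then obtain i where "i \<in> S a' \<inter> S a" "x a' i \<noteq> x a i" using incompatible[OF a'(1) a] by blast
    moreover have "i \<in> A" unfolding A_def using calculation(1) \<open>S a' \<subseteq> ?C\<close> by blast
    ultimately show False using a'(2) unfolding t_def by simp
  qed
  then show ?thesis using q unfolding a'_def by blast
qed

lemma card_of_incompatible_family_ordLeq_two_less:
  assumes rk: "Card_order rk" "\<not> finite (Field rk)" "regularCard rk"
    and S: "\<And>a. a \<in> I \<Longrightarrow> |S a| <o rk"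
    and x: "\<And>a i. a \<in> I \<Longrightarrow> i \<in> S a \<Longrightarrow> x a i \<in> Field rk"
    and incompatible: "\<And>a b. a \<in> I \<Longrightarrow> b \<in> I \<Longrightarrow> a \<noteq> b \<Longrightarrow> \<exists>i\<in>S a \<inter> S b. x a i \<noteq> x b i"
  shows "|I| \<le>o |two_less rk|"
proof -
  let ?C = "\<Union>\<xi>\<in>Field rk. Collect (closure_stage rk I S x \<xi>)"
  have "|?C| \<le>o |two_less rk|"
    by (rule card_of_UNION_ordLeq_infinite[OF two_less_infinite[OF rk(1,2)]
          card_of_Field_ordLeq_two_less[OF rk(1)]]) (intro ballI card_of_closure_stage[OF rk S])
  then have "|extension_index I x ` realized_restrictions rk I x ?C| \<le>o |two_less rk|"
    by (rule ordLeq_transitive[OF card_of_image card_of_realized_restrictions[OF rk]])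
  moreover have "I \<subseteq> extension_index I x ` realized_restrictions rk I x ?C"
    using incompatible_family_extension_index[OF rk S x incompatible] by (rule subsetI)
  ultimately show ?thesis by (rule ordLeq_transitive[OF card_of_mono1, rotated])
qed

lemma card_of_disjoint_open_family_ordLeq_two_less:
  assumes rk: "Card_order rk" "\<not> finite (Field rk)" "regularCard rk"
    and V_open: "\<And>a. a \<in> I \<Longrightarrow> openin (box_top D (Field rk) rk) (V a)"
    and V_ne: "\<And>a. a \<in> I \<Longrightarrow> V a \<noteq> {}"
    and disjoint: "disjoint_family_on V I"
  shows "|I| \<le>o |two_less rk|"
proof -
  let ?X = "D \<rightarrow>\<^sub>E Field rk"
  have "\<forall>a\<in>I. \<exists>p. p \<in> V a" using V_ne by blast
  then obtain p where p: "\<forall>a\<in>I. p a \<in> V a" by (rule bchoice[THEN exE])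
  have "\<forall>a\<in>I. \<exists>S. S \<subseteq> D \<and> |S| <o rk \<and> (\<forall>g\<in>?X. (\<forall>i\<in>S. g i = p a i) \<longrightarrow> g \<in> V a)"
  proof
    fix a assume "a \<in> I"
    then show "\<exists>S. S \<subseteq> D \<and> |S| <o rk \<and> (\<forall>g\<in>?X. (\<forall>i\<in>S. g i = p a i) \<longrightarrow> g \<in> V a)"
      using openin_box_topD(2)[OF rk(1,2) V_open] p by blast
  qed
  then obtain S where S: "\<forall>a\<in>I. S a \<subseteq> D \<and> |S a| <o rk \<and> (\<forall>g\<in>?X. (\<forall>i\<in>S a. g i = p a i) \<longrightarrow> g \<in> V a)"
    by (rule bchoice[THEN exE])
  have p_in: "p a \<in> ?X" if "a \<in> I" for a
    using openin_box_topD(1)[OF rk(1,2) V_open[OF that]] p that by blast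
  show ?thesis
  proof (rule card_of_incompatible_family_ordLeq_two_less[OF rk, of I S p])
    show "|S a| <o rk" if "a \<in> I" for a using S that by blast
    show "p a i \<in> Field rk" if "a \<in> I" "i \<in> S a" for a i using p_in[OF that(1)] S that by blast
  next
    fix a b assume ab: "a \<in> I" "b \<in> I" "a \<noteq> b"
    show "\<exists>i\<in>S a \<inter> S b. p a i \<noteq> p b i"
    proof (rule ccontr)
      assume agree: "\<not> (\<exists>i\<in>S a \<inter> S b. p a i \<noteq> p b i)"
      define g where "g = (\<lambda>i\<in>D. if i \<in> S a then p a i else p b i)"
      have g: "g \<in> ?X" using p_in[OF ab(1)] p_in[OF ab(2)] unfolding g_def PiE_iff by auto
      have "\<forall>i\<in>S a. g i = p a i" using S ab(1) unfolding g_def by auto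
      then have "g \<in> V a" using S ab(1) g by blast
      moreover have "\<forall>i\<in>S b. g i = p b i" using S ab agree unfolding g_def by auto
      then have "g \<in> V b" using S ab(2) g by blast
      ultimately show False using disjoint ab unfolding disjoint_family_on_def by blast
    qed
  qed
qed

lemma card_of_ordLeq_two_less_if_homeomorphic:
  assumes rk: "Card_order rk" "\<not> finite (Field rk)" "regularCard rk"
    and M: "M \<noteq> {}"
    and hom: "box_top M (Field rk) rk homeomorphic_space box_top M M rk"
  shows "|M| \<le>o |two_less rk|"
proof -
  obtain f g where fg: "homeomorphic_maps (box_top M (Field rk) rk) (box_top M M rk) f g"
    using hom unfolding homeomorphic_space_def by blast
  then have f: "continuous_map (box_top M (Field rk) rk) (box_top M M rk) f"
    and g: "continuous_map (box_top M M rk) (box_top M (Field rk) rk) g"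
    and fg_id: "\<And>y. y \<in> M \<rightarrow>\<^sub>E M \<Longrightarrow> f (g y) = y"
    unfolding homeomorphic_maps_def topspace_box_top[OF rk(1,2)] by blast+
  obtain m0 where m0: "m0 \<in> M" using M by blast
  define U where "U a = {y \<in> M \<rightarrow>\<^sub>E M. y m0 = a}" for a
  have "openin (box_top M M rk) (U a)" for a
  proof (rule openin_box_topI)
    show "U a \<subseteq> M \<rightarrow>\<^sub>E M" unfolding U_def by blast
    fix y assume "y \<in> U a"
    then show "\<exists>S\<subseteq>M. |S| <o rk \<and> (\<forall>g\<in>M \<rightarrow>\<^sub>E M. (\<forall>i\<in>S. g i = y i) \<longrightarrow> g \<in> U a)"
      using m0 card_of_finite_ordLess[OF rk(1,2), of "{m0}"] unfolding U_def
      by (intro exI[of _ "{m0}"]) simp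
  qed
  define V where "V a = {x \<in> M \<rightarrow>\<^sub>E Field rk. f x \<in> U a}" for a
  have V_open: "openin (box_top M (Field rk) rk) (V a)" if "a \<in> M" for a
    using openin_continuous_map_preimage[OF f \<open>openin (box_top M M rk) (U a)\<close>]
    unfolding V_def topspace_box_top[OF rk(1,2)] .
  have V_ne: "V a \<noteq> {}" if "a \<in> M" for a
  proof -
    have c: "(\<lambda>_\<in>M. a) \<in> M \<rightarrow>\<^sub>E M" using that by simp
    then have "g (\<lambda>_\<in>M. a) \<in> M \<rightarrow>\<^sub>E Field rk"
      using continuous_map_image_subset_topspace[OF g] unfolding topspace_box_top[OF rk(1,2)] by blast
    then have "g (\<lambda>_\<in>M. a) \<in> V a" unfolding V_def U_def using c fg_id[OF c] m0 by simp
    then show ?thesis by blast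
  qed
  show ?thesis
  proof (rule card_of_disjoint_open_family_ordLeq_two_less[OF rk])
    show "openin (box_top M (Field rk) rk) (V a)" if "a \<in> M" for a using V_open[OF that] .
    show "V a \<noteq> {}" if "a \<in> M" for a using V_ne[OF that] .
    show "disjoint_family_on V M" unfolding disjoint_family_on_def V_def U_def by blast
  qed
qed

theorem mainTheorem5:
  fixes rk :: "'k rel" and rm :: "'m rel"
  assumes "Card_order rk" and "BNF_Cardinal_Arithmetic.cinfinite rk" and "regularCard rk"
    and "Card_order rm" and "cof_is rm rk" and "ordLess2 rk rm"
  shows "(box_top (Field rm) (Field rk) rk homeomorphic_space box_top (Field rm) (Field rm) rk)
         \<longleftrightarrow> ordLeq2 (card_of (Field rm)) (card_of (two_less rk))"
proof -
  have rk: "Card_order rk" "\<not> finite (Field rk)" "regularCard rk"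
    using assms(1-3) unfolding cinfinite_def by auto
  have "|Field rk| <o |Field rm|"
    using ordIso_ordLess_trans[OF card_of_Field_ordIso[OF assms(1)]
        ordLess_ordIso_trans[OF assms(6) ordIso_symmetric[OF card_of_Field_ordIso[OF assms(4)]]]] .
  then have KM: "|Field rk| \<le>o |Field rm|" by (rule ordLess_imp_ordLeq)
  have M: "\<not> finite (Field rm)" using card_of_ordLeq_infinite[OF KM rk(2)] .
  show ?thesis
  proof
    assume "box_top (Field rm) (Field rk) rk homeomorphic_space box_top (Field rm) (Field rm) rk"
    then show "|Field rm| \<le>o |two_less rk|"
      by (rule card_of_ordLeq_two_less_if_homeomorphic[OF rk infinite_imp_nonempty[OF M]])
  next
    assume "|Field rm| \<le>o |two_less rk|"
    then show "box_top (Field rm) (Field rk) rk homeomorphic_space box_top (Field rm) (Field rm) rk"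
      by (rule box_top_homeomorphic_if_ordLeq_two_less[OF rk M KM])
  qed
qed

end
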